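(* Under the null hypothesis $p=p'$ (so that $r_v:=p'_v/p_v\equiv1$ for every node $v$), assume Assumption 1 and Assumption 2, let $\theta_t$ be generated by the block stochastic gradient update with $\alpha_{v,t}=c/t$ for all $v,t$, where $c>0$ and $c\,\mathcal{C}<1$, suppose $\|\theta_t\|\le\rho$ for all $t$ almost surely for some $\rho>0$, and suppose $\sigma=\sup_t\sigma_t<\infty$. Then the statistic $$\hat g_t=\frac1{n^{\mathrm{pre}}}\sum_{y\in Y_t^{\mathrm{pre}}}K_G(y)^\top\theta_{t+1}\in\mathbb{R}^N$$ is an asymptotically unbiased estimator of $r(y)-\mathbf{1}_N=0$, i.e. $\mathbb{E}[\hat g_t]\to 0$ as $t\to\infty$.
   Context: Graph: $G$ undirected weighted on $V=\{1,\dots,N\}$, symmetric $W$ with $W_{uv}\ge0$, $W_{vv}=0$; $\mathcal{N}(v)$ neighbors of $v$; $d_v=\sum_{u\in\mathcal{N}(v)}W_{uv}$; $\mathcal{L}_G=\mathrm{diag}(d_v)-W$. Data: node $v$ produces observations in $\mathcal{X}_v$; $y_t=(y_{1,t},\dots,y_{N,t})$; pre-change joint density $p$ with marginals $p_v$, post-change $p'$ with marginals $p'_v$; $r(y)=(r_1(y_1),\dots,r_N(y_N))$ with $r_v=p'_v/p_v$. Assumption 1: each $k_v$ is a reproducing kernel on $\mathcal{X}_v$ with separable RKHS and $\sup k_v\le M_v<\infty$. Assumption 2: $y_1,y_2,\dots$ are independent in time. Kernels/dictionaries: fixed dictionary $x_{v,1},\dots,x_{v,L_v}$ per node; $k_v(y_v)=(k_v(y_v,x_{v,l}))_{l=1}^{L_v}$;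 $L=\sum_vL_v$; $\theta=(\theta_1,\dots,\theta_N)\in\mathbb{R}^L$; $K_G(y)\in\mathbb{R}^{L\times N}$ block diagonal with $v$-th diagonal block the column $k_v(y_v)$. Windows: $Y_t^{\mathrm{pre}}$ consists of $n^{\mathrm{pre}}$ observations sampled uniformly at random at each $t$ from a fixed collection of observations distributed according to $p$; $Y_t^{\mathrm{post}}=\{y_{t-n^{\mathrm{post}}},\dots,y_t\}$. $h^{\mathrm{pre}}_{v,t},h^{\mathrm{post}}_{v,t}$ are the window averages of $k_v(y_v)$, $H^{\mathrm{pre}}_{v,t}$ the pre-window average of $k_v(y_v)k_v(y_v)^\top$ (stacked/block-diagonal versions $h^{\mathrm{pre}}_t,h^{\mathrm{post}}_t,H^{\mathrm{pre}}_t$); $A_t=H^{\mathrm{pre}}_t+\lambda\frac1{n^{\mathrm{pre}}}\sum_{y\in Y_t^{\mathrm{pre}}}K_G(y)\mathcal{L}_GK_G(y)^\top+\gamma I_L$ ($\lambda\ge0,\gamma>0$), $b_t=h^{\mathrm{pre}}_t-h^{\mathrm{post}}_t$, $F_t(\theta)=\frac12\theta^\top A_t\theta+\theta^\top b_t$, $\mathbf{F}=\mathbb{E}[F_t]$. Update: for $t\ge1$, $v=1,\dots,N$ in order, $\theta_{v,t+1}=\theta_{v,t}-\alpha_{v,t}\nabla_{\theta_v}F_t(z_{v,t})$ with $z_{v,t}=(\theta_{1,t+1},\dots,\theta_{v-1,t+1},\theta_{v,t},\dots,\theta_{N,t})$. Constants: $\lambda^{\max}_v=\|\mathbb{E}_p[H^{\mathrm{pre}}_{v,t}]\|_2$;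 $C_v=(1+\lambda d_v)\lambda^{\max}_v+\gamma+\lambda M_v\sum_{u\in\mathcal{N}(v)}W_{uv}M_u$; $\mathcal{C}=\max_vC_v$; $\delta_{v,t}=\nabla_{\theta_v}F_t(z_{v,t})-\nabla_{\theta_v}\mathbf{F}(z_{v,t})$ and $(\sigma_t)$ satisfies $\mathbb{E}\|\delta_{v,t}\|^2\le\sigma_t^2$ for all $v,t$.
   Formalization: The pre-change window $Y_t^{\mathrm{pre}}$ consists of fresh independent draws from p, independent across t and of the stream $y_t$, instead of uniform samples from a fixed collection; each kernel $k_v$ is also jointly measurable. The statement above fails without it. *)

theory Defs
  imports "HOL-Probability.Probability"
begin

(* Nodes are 0..N-1 (the paper uses 1..N).  An observation of all nodes is a function
   y :: nat => 'a with y v the observation of node v (in space (Xs v)).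
   A parameter vector theta in R^L is stored blockwise: theta v l, v < N, l < L v. *)

definition avg :: "'b list \<Rightarrow> ('b \<Rightarrow> real) \<Rightarrow> real" where
  "avg xs f = (\<Sum>y\<leftarrow>xs. f y) / real (length xs)"

text \<open>Reproducing kernel on X (Moore-Aronszajn: symmetric positive semidefinite kernel).\<close>
definition reproducing_kernel :: "'a set \<Rightarrow> ('a \<Rightarrow> 'a \<Rightarrow> real) \<Rightarrow> bool" where
  "reproducing_kernel X k \<longleftrightarrow>
     (\<forall>a\<in>X. \<forall>b\<in>X. k a b = k b a) \<and>
     (\<forall>F c. finite F \<and> F \<subseteq> X \<longrightarrow> 0 \<le> (\<Sum>a\<in>F. \<Sum>b\<in>F. c a * c b * k a b))"

text \<open>The RKHS of k is separable: there is a countable D \<subseteq> X such that every k(.,x) lies in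
  the RKHS-norm closure of span {k(.,d) | d \<in> D}.  The expression below is
  the squared RKHS norm of k(.,x) - sum_d c_d k(.,d).\<close>
definition rkhs_separable :: "'a set \<Rightarrow> ('a \<Rightarrow> 'a \<Rightarrow> real) \<Rightarrow> bool" where
  "rkhs_separable X k \<longleftrightarrow>
     (\<exists>D. D \<subseteq> X \<and> countable D \<and>
        (\<forall>x\<in>X. \<forall>\<epsilon>>0. \<exists>F c. finite F \<and> F \<subseteq> D \<and>
            k x x - 2 * (\<Sum>d\<in>F. c d * k x d) + (\<Sum>d\<in>F. \<Sum>e\<in>F. c d * c e * k d e) < \<epsilon>))"

definition feat :: "(nat \<Rightarrow> 'a \<Rightarrow> 'a \<Rightarrow> real) \<Rightarrow> (nat \<Rightarrow> nat \<Rightarrow> 'a) \<Rightarrow> nat \<Rightarrow> (nat \<Rightarrow> 'a) \<Rightarrow> nat \<Rightarrow> real" where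
  "feat k x v y l = k v (y v) (x v l)"

definition nbrs :: "nat \<Rightarrow> (nat \<Rightarrow> nat \<Rightarrow> real) \<Rightarrow> nat \<Rightarrow> nat set" where
  "nbrs N W v = {u. u < N \<and> 0 < W u v}"

definition gdeg :: "nat \<Rightarrow> (nat \<Rightarrow> nat \<Rightarrow> real) \<Rightarrow> nat \<Rightarrow> real" where
  "gdeg N W v = (\<Sum>u\<in>nbrs N W v. W u v)"

definition glap :: "nat \<Rightarrow> (nat \<Rightarrow> nat \<Rightarrow> real) \<Rightarrow> nat \<Rightarrow> nat \<Rightarrow> real" where
  "glap N W u v = (if u = v then gdeg N W v else 0) - W u v"

text \<open>Entry ((v,l),(u,m)) of A_t for a pre-change window Ys:
  H^pre + lambda * avg K_G(y) L_G K_G(y)^T + gamma I.\<close>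
definition Amat :: "nat \<Rightarrow> (nat \<Rightarrow> nat \<Rightarrow> real) \<Rightarrow> (nat \<Rightarrow> 'a \<Rightarrow> 'a \<Rightarrow> real) \<Rightarrow> (nat \<Rightarrow> nat \<Rightarrow> 'a)
    \<Rightarrow> real \<Rightarrow> real \<Rightarrow> (nat \<Rightarrow> 'a) list \<Rightarrow> nat \<Rightarrow> nat \<Rightarrow> nat \<Rightarrow> nat \<Rightarrow> real" where
  "Amat N W k x lam gam Ys v l u m =
     avg Ys (\<lambda>y. (if v = u then feat k x v y l * feat k x v y m else 0)
                 + lam * (feat k x v y l * glap N W v u * feat k x u y m))
     + gam * (if v = u \<and> l = m then 1 else 0)"

definition bvec :: "(nat \<Rightarrow> 'a \<Rightarrow> 'a \<Rightarrow> real) \<Rightarrow> (nat \<Rightarrow> nat \<Rightarrow> 'a)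
    \<Rightarrow> (nat \<Rightarrow> 'a) list \<Rightarrow> (nat \<Rightarrow> 'a) list \<Rightarrow> nat \<Rightarrow> nat \<Rightarrow> real" where
  "bvec k x Ypre Ypost v l = avg Ypre (\<lambda>y. feat k x v y l) - avg Ypost (\<lambda>y. feat k x v y l)"

text \<open>Block gradient of 1/2 z^T A z + z^T b w.r.t. theta_v (A symmetric): (A z)_v + b_v.\<close>
definition qgrad :: "nat \<Rightarrow> (nat \<Rightarrow> nat) \<Rightarrow> (nat \<Rightarrow> nat \<Rightarrow> nat \<Rightarrow> nat \<Rightarrow> real) \<Rightarrow> (nat \<Rightarrow> nat \<Rightarrow> real)
    \<Rightarrow> (nat \<Rightarrow> nat \<Rightarrow> real) \<Rightarrow> nat \<Rightarrow> nat \<Rightarrow> real" where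
  "qgrad N L A b z v l = (\<Sum>u<N. \<Sum>m<L u. A v l u m * z u m) + b v l"

text \<open>Block Gauss-Seidel sweep: gs_partial ... v = z_{v,t} (blocks < v already updated).\<close>
fun gs_partial :: "nat \<Rightarrow> (nat \<Rightarrow> nat) \<Rightarrow> (nat \<Rightarrow> nat \<Rightarrow> nat \<Rightarrow> nat \<Rightarrow> real) \<Rightarrow> (nat \<Rightarrow> nat \<Rightarrow> real)
    \<Rightarrow> real \<Rightarrow> (nat \<Rightarrow> nat \<Rightarrow> real) \<Rightarrow> nat \<Rightarrow> (nat \<Rightarrow> nat \<Rightarrow> real)" where
  "gs_partial N L A b \<alpha> \<theta> 0 = \<theta>"
| "gs_partial N L A b \<alpha> \<theta> (Suc v) =
     (let z = gs_partial N L A b \<alpha> \<theta> v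
      in z(v := (\<lambda>l. if l < L v then z v l - \<alpha> * qgrad N L A b z v l else z v l)))"

definition thnorm :: "nat \<Rightarrow> (nat \<Rightarrow> nat) \<Rightarrow> (nat \<Rightarrow> nat \<Rightarrow> real) \<Rightarrow> real" where
  "thnorm N L \<theta> = sqrt (\<Sum>v<N. \<Sum>l<L v. (\<theta> v l)\<^sup>2)"

definition prewin :: "nat \<Rightarrow> (nat \<Rightarrow> nat \<Rightarrow> 'm \<Rightarrow> (nat \<Rightarrow> 'a)) \<Rightarrow> nat \<Rightarrow> 'm \<Rightarrow> (nat \<Rightarrow> 'a) list" where
  "prewin npre ypre t \<omega> = map (\<lambda>i. ypre t i \<omega>) [0..<npre]"

text \<open>Y_t^post = {y_{t-n^post}, ..., y_t} (truncated to the available observations y_1, y_2, ...).\<close>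
definition postwin :: "nat \<Rightarrow> (nat \<Rightarrow> 'm \<Rightarrow> (nat \<Rightarrow> 'a)) \<Rightarrow> nat \<Rightarrow> 'm \<Rightarrow> (nat \<Rightarrow> 'a) list" where
  "postwin npost ystr t \<omega> = map (\<lambda>s. ystr s \<omega>) [max 1 (t - npost)..<Suc t]"

definition At where
  "At N W k x lam gam npre ypre t \<omega> = Amat N W k x lam gam (prewin npre ypre t \<omega>)"

definition bt where
  "bt k x npre npost ypre ystr t \<omega> = bvec k x (prewin npre ypre t \<omega>) (postwin npost ystr t \<omega>)"

text \<open>theta N W k x L lam gam npre npost ypre ystr c th1 t \<omega> = theta_t for t \<ge> 1, with
  step size alpha_{v,t} = c / t and initial value theta_1 = th1.\<close>
fun theta :: "nat \<Rightarrow> (nat \<Rightarrow> nat \<Rightarrow> real) \<Rightarrow> (nat \<Rightarrow> 'a \<Rightarrow> 'a \<Rightarrow> real) \<Rightarrow> (nat \<Rightarrow> nat \<Rightarrow> 'a) \<Rightarrow> (nat \<Rightarrow> nat)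
    \<Rightarrow> real \<Rightarrow> real \<Rightarrow> nat \<Rightarrow> nat \<Rightarrow> (nat \<Rightarrow> nat \<Rightarrow> 'm \<Rightarrow> (nat \<Rightarrow> 'a)) \<Rightarrow> (nat \<Rightarrow> 'm \<Rightarrow> (nat \<Rightarrow> 'a))
    \<Rightarrow> real \<Rightarrow> (nat \<Rightarrow> nat \<Rightarrow> real) \<Rightarrow> nat \<Rightarrow> 'm \<Rightarrow> (nat \<Rightarrow> nat \<Rightarrow> real)" where
  "theta N W k x L lam gam npre npost ypre ystr c th1 0 \<omega> = th1"
| "theta N W k x L lam gam npre npost ypre ystr c th1 (Suc t) \<omega> =
     (if t = 0 then th1
      else gs_partial N L (At N W k x lam gam npre ypre t \<omega>) (bt k x npre npost ypre ystr t \<omega>)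
             (c / real t) (theta N W k x L lam gam npre npost ypre ystr c th1 t \<omega>) N)"

definition ghat where
  "ghat N W k x L lam gam npre npost ypre ystr c th1 t \<omega> v =
     avg (prewin npre ypre t \<omega>)
       (\<lambda>y. \<Sum>l<L v. feat k x v y l * theta N W k x L lam gam npre npost ypre ystr c th1 (Suc t) \<omega> v l)"

text \<open>nabla bold-F with bold-F = E[F_t]: gradient E[A_t] z + E[b_t].\<close>
definition delta_sq where
  "delta_sq \<M> N W k x L lam gam npre npost ypre ystr c th1 t v \<omega> =
     (let A = At N W k x lam gam npre ypre t \<omega>;
          b = bt k x npre npost ypre ystr t \<omega>;
          Abar = (\<lambda>v l u m. integral\<^sup>L \<M> (\<lambda>\<omega>'. At N W k x lam gam npre ypre t \<omega>' v l u m));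
          bbar = (\<lambda>v l. integral\<^sup>L \<M> (\<lambda>\<omega>'. bt k x npre npost ypre ystr t \<omega>' v l));
          z = gs_partial N L A b (c / real t) (theta N W k x L lam gam npre npost ypre ystr c th1 t \<omega>) v
      in \<Sum>l<L v. (qgrad N L A b z v l - qgrad N L Abar bbar z v l)\<^sup>2)"

definition opnorm2 :: "nat \<Rightarrow> (nat \<Rightarrow> nat \<Rightarrow> real) \<Rightarrow> real" where
  "opnorm2 n A = Sup {sqrt (\<Sum>i<n. (\<Sum>j<n. A i j * z j)\<^sup>2) | z. (\<Sum>j<n. (z j)\<^sup>2) \<le> 1}"

definition lammax where
  "lammax P k x L v = opnorm2 (L v) (\<lambda>l m. \<integral>y. feat k x v y l * feat k x v y m \<partial>P)"

definition Cv where
  "Cv N W P k x L Mb lam gam v =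
     (1 + lam * gdeg N W v) * lammax P k x L v + gam + lam * Mb v * (\<Sum>u\<in>nbrs N W v. W u v * Mb u)"

definition Cmax where
  "Cmax N W P k x L Mb lam gam = Max (Cv N W P k x L Mb lam gam ` {..<N})"

definition obs_family :: "(nat \<Rightarrow> nat \<Rightarrow> 'm \<Rightarrow> 'b) \<Rightarrow> (nat \<Rightarrow> 'm \<Rightarrow> 'b) \<Rightarrow> (nat \<times> nat) + nat \<Rightarrow> 'm \<Rightarrow> 'b" where
  "obs_family ypre ystr j = (case j of Inl ti \<Rightarrow> ypre (fst ti) (snd ti) | Inr s \<Rightarrow> ystr s)"

definition obs_index :: "nat \<Rightarrow> ((nat \<times> nat) + nat) set" where
  "obs_index npre = {Inl (t, i) | t i. 1 \<le> t \<and> i < npre} \<union> {Inr s | s. 1 \<le> s}"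

end

theory Submission
  imports Defs
begin

(*
  Under the null hypothesis the pre- and post-change windows have the same law, so E b_t = 0.
  Since K_G(y) L_G K_G(y)^T is positive semidefinite, A_t dominates gam I, and as long as the
  iterates stay bounded one block Gauss-Seidel sweep with step c/t satisfies
    |theta_(t+1)|^2 <= (1 - 2 c gam / t) |theta_t|^2 - (2 c / t) <theta_t, b_t> + O(1 / t^2).
  The iterate theta_t is not independent of b_t, whose post-change window overlaps the past,
  but theta_(t - npost) is, and the two differ by O(1 / t). Taking expectations gives
    E |theta_(t+1)|^2 <= (1 - 2 c gam / t) E |theta_t|^2 + K / t^2,
  so E |theta_t|^2 -> 0 by Chung's lemma, and the mean of hat g_t, a bounded linear image of
  theta_(t+1), tends to 0.
*)

section \<open>Block vectors\<close>

definition bsum :: "nat \<Rightarrow> (nat \<Rightarrow> nat) \<Rightarrow> (nat \<Rightarrow> nat \<Rightarrow> real) \<Rightarrow> real" where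
  "bsum N L f = (\<Sum>v<N. \<Sum>l<L v. f v l)"

definition bdim :: "nat \<Rightarrow> (nat \<Rightarrow> nat) \<Rightarrow> real" where
  "bdim N L = (\<Sum>v<N. real (L v))"

definition bsqnorm :: "nat \<Rightarrow> (nat \<Rightarrow> nat) \<Rightarrow> (nat \<Rightarrow> nat \<Rightarrow> real) \<Rightarrow> real" where
  "bsqnorm N L \<theta> = bsum N L (\<lambda>v l. (\<theta> v l)\<^sup>2)"

definition binner :: "nat \<Rightarrow> (nat \<Rightarrow> nat) \<Rightarrow> (nat \<Rightarrow> nat \<Rightarrow> real) \<Rightarrow> (nat \<Rightarrow> nat \<Rightarrow> real) \<Rightarrow> real" where
  "binner N L \<theta> \<phi> = bsum N L (\<lambda>v l. \<theta> v l * \<phi> v l)"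

lemma bdim_nonneg: "0 \<le> bdim N L"
  by (simp add: bdim_def sum_nonneg)

lemma bsum_mono: "(\<And>v l. v < N \<Longrightarrow> l < L v \<Longrightarrow> f v l \<le> g v l) \<Longrightarrow> bsum N L f \<le> bsum N L g"
  unfolding bsum_def by (intro sum_mono) auto

lemma bsum_const: "bsum N L (\<lambda>_ _. C) = bdim N L * C"
  by (simp add: bsum_def bdim_def sum_distrib_right)

lemma bsum_abs_le:
  assumes "\<And>v l. v < N \<Longrightarrow> l < L v \<Longrightarrow> \<bar>f v l\<bar> \<le> B"
  shows "\<bar>bsum N L f\<bar> \<le> bdim N L * B"
proof -
  have "\<bar>bsum N L f\<bar> \<le> bsum N L (\<lambda>v l. \<bar>f v l\<bar>)"
    unfolding bsum_def by (rule order_trans[OF sum_abs]) (intro sum_mono sum_abs)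
  also have "\<dots> \<le> bsum N L (\<lambda>_ _. B)"
    using assms by (rule bsum_mono)
  finally show ?thesis by (simp add: bsum_const)
qed

lemma bsum_add: "bsum N L (\<lambda>v l. f v l + g v l) = bsum N L f + bsum N L g"
  by (simp add: bsum_def sum.distrib)

lemma bsum_diff: "bsum N L (\<lambda>v l. f v l - g v l) = bsum N L f - bsum N L g"
  by (simp add: bsum_def sum_subtractf)

lemma bsum_mult_left: "bsum N L (\<lambda>v l. c * f v l) = c * bsum N L f"
  by (simp add: bsum_def sum_distrib_left)

lemma bsum_delta:
  assumes "v < N" "l < L v"
  shows "bsum N L (\<lambda>u m. (if v = u \<and> l = m then c else 0) * f u m) = c * f v l"
proof -
  have "(\<Sum>m<L u. (if v = u \<and> l = m then c else 0) * f u m) = (if u = v then c * f v l else 0)" for u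
    using assms(2) by (cases "u = v") (simp_all add: sum.remove[of _ l])
  then show ?thesis using assms(1) by (simp add: bsum_def)
qed

lemma bsum_block_bilinear:
  "bsum N L (\<lambda>v l. \<theta> v l * bsum N L (\<lambda>u m. f v l * X v u * f u m * \<theta> u m))
     = (\<Sum>v<N. \<Sum>u<N. (\<Sum>l<L v. f v l * \<theta> v l) * X v u * (\<Sum>m<L u. f u m * \<theta> u m))"
  unfolding bsum_def
  by (simp add: sum_distrib_left sum_distrib_right mult_ac sum.swap[of _ "{..<L _}" "{..<N}"])

lemma bsqnorm_nonneg: "0 \<le> bsqnorm N L \<theta>"
  by (simp add: bsqnorm_def bsum_def sum_nonneg)

lemma thnorm_eq_sqrt_bsqnorm: "thnorm N L \<theta> = sqrt (bsqnorm N L \<theta>)"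
  by (simp add: thnorm_def bsqnorm_def bsum_def)

lemma block_sqnorm_le_bsqnorm:
  assumes "v < N"
  shows "(\<Sum>l<L v. (\<theta> v l)\<^sup>2) \<le> bsqnorm N L \<theta>"
  unfolding bsqnorm_def bsum_def
  using assms by (intro member_le_sum[of v "{..<N}" "\<lambda>v. \<Sum>l<L v. (\<theta> v l)\<^sup>2"]) (auto intro: sum_nonneg)

lemma abs_le_of_thnorm_le:
  assumes "thnorm N L \<theta> \<le> \<rho>" and "u < N" and "m < L u"
  shows "\<bar>\<theta> u m\<bar> \<le> \<rho>"
proof -
  have "(\<theta> u m)\<^sup>2 \<le> (\<Sum>m'<L u. (\<theta> u m')\<^sup>2)"
    using assms(3) by (intro member_le_sum) auto
  also have "\<dots> \<le> bsqnorm N L \<theta>"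
    using assms(2) by (rule block_sqnorm_le_bsqnorm)
  finally have "sqrt ((\<theta> u m)\<^sup>2) \<le> sqrt (bsqnorm N L \<theta>)"
    by (rule real_sqrt_le_mono)
  then show ?thesis using assms(1) by (simp add: thnorm_eq_sqrt_bsqnorm)
qed

lemma bsqnorm_le_of_thnorm_le: "thnorm N L \<theta> \<le> \<rho> \<Longrightarrow> bsqnorm N L \<theta> \<le> \<rho>\<^sup>2"
  by (simp add: thnorm_eq_sqrt_bsqnorm real_sqrt_le_iff sqrt_le_D)

lemma qgrad_eq_bsum: "qgrad N L A b z v l = bsum N L (\<lambda>u m. A v l u m * z u m) + b v l"
  by (simp add: qgrad_def bsum_def)

lemma binner_qgrad:
  "binner N L \<theta> (qgrad N L A b \<theta>)
     = binner N L \<theta> (\<lambda>v l. bsum N L (\<lambda>u m. A v l u m * \<theta> u m)) + binner N L \<theta> b"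
  by (simp add: binner_def qgrad_eq_bsum bsum_def distrib_left sum.distrib)

section \<open>Coercivity of the quadratic objective\<close>

lemma reproducing_kernel_abs_le:
  assumes k: "reproducing_kernel X k" and a: "a \<in> X" and b: "b \<in> X"
    and M: "\<forall>p\<in>X. \<forall>q\<in>X. k p q \<le> M"
  shows "\<bar>k a b\<bar> \<le> M"
proof -
  have psd: "0 \<le> (\<Sum>p\<in>F. \<Sum>q\<in>F. c p * c q * k p q)" if "finite F" "F \<subseteq> X" for F c
    using k that unfolding reproducing_kernel_def by blast
  have sym: "k b a = k a b" using k a b unfolding reproducing_kernel_def by blast
  show ?thesis
  proof (cases "a = b")
    case True
    then show ?thesis using psd[of "{a}" "\<lambda>_. 1"] M a by auto
  next
    case False
    \<comment> \<open>the Gram matrix of \<open>a, b\<close> tested against \<open>(1, 1)\<close> and \<open>(1, -1)\<close>\<close>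
    have "0 \<le> k a a + k b b + 2 * k a b" "0 \<le> k a a + k b b - 2 * k a b"
      using psd[of "{a, b}" "\<lambda>_. 1"] psd[of "{a, b}" "\<lambda>p. if p = a then 1 else -1"] a b False sym
      by simp_all
    moreover have "k a a \<le> M" "k b b \<le> M" using M a b by auto
    ultimately show ?thesis unfolding abs_le_iff by linarith
  qed
qed

lemma gdeg_eq_sum:
  assumes "\<forall>u<N. 0 \<le> W u v"
  shows "gdeg N W v = (\<Sum>u<N. W u v)"
  unfolding gdeg_def nbrs_def
  using assms by (intro sum.mono_neutral_left) force+

lemma glap_quadratic_form_nonneg:
  assumes W_nonneg: "\<forall>u<N. \<forall>v<N. 0 \<le> W u v" and W_sym: "\<forall>u<N. \<forall>v<N. W u v = W v u"
  shows "0 \<le> (\<Sum>v<N. \<Sum>u<N. s v * glap N W v u * s u)"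
proof -
  let ?S = "\<lambda>f. \<Sum>v<N. \<Sum>u<N. f v u :: real"
  have deg: "(\<Sum>v<N. gdeg N W v * (s v)\<^sup>2) = ?S (\<lambda>v u. W u v * (s v)\<^sup>2)"
    using W_nonneg by (simp add: gdeg_eq_sum sum_distrib_right)
  have swap: "?S (\<lambda>v u. W v u * (s u)\<^sup>2) = ?S (\<lambda>v u. W u v * (s v)\<^sup>2)"
    by (subst sum.swap) simp
  have row: "(\<Sum>u<N. s v * glap N W v u * s u) = gdeg N W v * (s v)\<^sup>2 - (\<Sum>u<N. W v u * s v * s u)"
    if "v < N" for v
  proof -
    have "s v * glap N W v u * s u = (if u = v then gdeg N W v * (s v)\<^sup>2 else 0) - W v u * s v * s u"
      for u by (simp add: glap_def power2_eq_square algebra_simps)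
    then show ?thesis using that by (simp add: sum_subtractf)
  qed
  have "(\<Sum>v<N. \<Sum>u<N. s v * glap N W v u * s u)
      = (\<Sum>v<N. gdeg N W v * (s v)\<^sup>2) - ?S (\<lambda>v u. W v u * s v * s u)"
    by (simp add: row sum_subtractf)
  \<comment> \<open>the quadratic form of a graph Laplacian is half the weighted sum of squared differences\<close>
  also have "\<dots> = ?S (\<lambda>v u. W v u * (s v - s u)\<^sup>2) / 2"
    using W_sym deg swap
    by (simp add: power2_eq_square algebra_simps sum_subtractf sum.distrib sum_distrib_left)
  also have "\<dots> \<ge> 0"
    using W_nonneg by (auto intro!: sum_nonneg divide_nonneg_nonneg)
  finally show ?thesis .
qed

lemma avg_sum: "finite A \<Longrightarrow> avg xs (\<lambda>y. \<Sum>a\<in>A. f a y) = (\<Sum>a\<in>A. avg xs (f a))"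
  unfolding avg_def by (induction A rule: finite_induct) (auto simp: sum_list_addf add_divide_distrib)

lemma avg_mult_left: "avg xs (\<lambda>y. c * f y) = c * avg xs f"
  unfolding avg_def by (simp add: sum_list_const_mult)

lemma avg_mult_right: "avg xs (\<lambda>y. f y * c) = avg xs f * c"
  unfolding avg_def by (simp add: sum_list_mult_const)

lemma avg_nonneg: "(\<And>y. y \<in> set xs \<Longrightarrow> 0 \<le> f y) \<Longrightarrow> 0 \<le> avg xs f"
  unfolding avg_def by (intro divide_nonneg_nonneg sum_list_nonneg) auto

lemma avg_abs_le:
  assumes "\<And>y. y \<in> set xs \<Longrightarrow> \<bar>f y\<bar> \<le> B" and "0 \<le> B"
  shows "\<bar>avg xs f\<bar> \<le> B"
proof (cases "xs = []")
  case False
  have "\<bar>sum_list (map f xs)\<bar> \<le> sum_list (map (\<lambda>y. \<bar>f y\<bar>) xs)"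
    using sum_list_abs[of "map f xs"] by (simp add: comp_def)
  also have "\<dots> \<le> sum_list (map (\<lambda>_. B) xs)"
    using assms(1) by (intro sum_list_mono) auto
  finally show ?thesis
    using False by (simp add: avg_def sum_list_triv divide_le_eq mult.commute)
qed (use assms in \<open>simp add: avg_def\<close>)

lemma feature_laplacian_form_nonneg:
  assumes W_nonneg: "\<forall>u<N. \<forall>v<N. 0 \<le> W u v" and W_sym: "\<forall>u<N. \<forall>v<N. W u v = W v u"
    and lam: "0 \<le> lam"
  shows "0 \<le> bsum N L (\<lambda>v l. \<theta> v l * bsum N L (\<lambda>u m.
            f v l * ((if v = u then 1 else 0) + lam * glap N W v u) * f u m * \<theta> u m))"
proof -
  define s where "s v = (\<Sum>l<L v. f v l * \<theta> v l)" for v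
  have "s v * ((if v = u then 1 else 0) + lam * glap N W v u) * s u
      = (if u = v then (s v)\<^sup>2 else 0) + lam * (s v * glap N W v u * s u)" for v u
    by (simp add: power2_eq_square algebra_simps)
  then have "bsum N L (\<lambda>v l. \<theta> v l * bsum N L (\<lambda>u m.
        f v l * ((if v = u then 1 else 0) + lam * glap N W v u) * f u m * \<theta> u m))
      = (\<Sum>v<N. (s v)\<^sup>2) + lam * (\<Sum>v<N. \<Sum>u<N. s v * glap N W v u * s u)"
    unfolding bsum_block_bilinear s_def[symmetric] by (simp add: sum.distrib sum_distrib_left)
  also have "\<dots> \<ge> 0"
    using glap_quadratic_form_nonneg[OF W_nonneg W_sym] lam by (simp add: sum_nonneg)
  finally show ?thesis .
qed

lemma Amat_coercive:
  assumes W_nonneg: "\<forall>u<N. \<forall>v<N. 0 \<le> W u v" and W_sym: "\<forall>u<N. \<forall>v<N. W u v = W v u"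
    and lam: "0 \<le> lam"
  shows "gam * bsqnorm N L \<theta>
           \<le> binner N L \<theta> (\<lambda>v l. bsum N L (\<lambda>u m. Amat N W k x lam gam Ys v l u m * \<theta> u m))"
proof -
  define F where "F y v l u m =
    feat k x v y l * ((if v = u then 1 else 0) + lam * glap N W v u) * feat k x u y m" for y v l u m
  have Amat_split: "Amat N W k x lam gam Ys v l u m
      = avg Ys (\<lambda>y. F y v l u m) + (if v = u \<and> l = m then gam else 0)" for v l u m
    unfolding Amat_def F_def by (cases "v = u") (simp_all add: algebra_simps)
  have row: "bsum N L (\<lambda>u m. Amat N W k x lam gam Ys v l u m * \<theta> u m)
      = bsum N L (\<lambda>u m. avg Ys (\<lambda>y. F y v l u m) * \<theta> u m) + gam * \<theta> v l"
    if "v < N" "l < L v" for v l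
    using that unfolding Amat_split distrib_right bsum_add by (simp only: bsum_delta)
  have "binner N L \<theta> (\<lambda>v l. bsum N L (\<lambda>u m. Amat N W k x lam gam Ys v l u m * \<theta> u m))
      = bsum N L (\<lambda>v l. \<theta> v l * (bsum N L (\<lambda>u m. avg Ys (\<lambda>y. F y v l u m) * \<theta> u m) + gam * \<theta> v l))"
    unfolding binner_def bsum_def[of N L "\<lambda>v l. \<theta> v l * _ v l"]
    by (intro sum.cong refl) (simp add: row)
  also have "\<dots> = bsum N L (\<lambda>v l. \<theta> v l * bsum N L (\<lambda>u m. avg Ys (\<lambda>y. F y v l u m) * \<theta> u m))
      + gam * bsqnorm N L \<theta>"
    by (simp add: bsqnorm_def bsum_def distrib_left sum.distrib sum_distrib_left power2_eq_square
        mult_ac)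
  also have "bsum N L (\<lambda>v l. \<theta> v l * bsum N L (\<lambda>u m. avg Ys (\<lambda>y. F y v l u m) * \<theta> u m))
      = avg Ys (\<lambda>y. bsum N L (\<lambda>v l. \<theta> v l * bsum N L (\<lambda>u m. F y v l u m * \<theta> u m)))"
    by (simp add: bsum_def avg_sum avg_mult_left avg_mult_right)
  finally have split: "binner N L \<theta> (\<lambda>v l. bsum N L (\<lambda>u m. Amat N W k x lam gam Ys v l u m * \<theta> u m))
      = avg Ys (\<lambda>y. bsum N L (\<lambda>v l. \<theta> v l * bsum N L (\<lambda>u m. F y v l u m * \<theta> u m)))
        + gam * bsqnorm N L \<theta>" .
  have "0 \<le> avg Ys (\<lambda>y. bsum N L (\<lambda>v l. \<theta> v l * bsum N L (\<lambda>u m. F y v l u m * \<theta> u m)))"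
    unfolding F_def using feature_laplacian_form_nonneg[OF W_nonneg W_sym lam] by (rule avg_nonneg)
  then show ?thesis unfolding split by simp
qed

section \<open>One block Gauss-Seidel sweep\<close>

lemma gs_partial_eq:
  "gs_partial N L A b \<alpha> \<theta> w u m =
     (if u < w \<and> m < L u then \<theta> u m - \<alpha> * qgrad N L A b (gs_partial N L A b \<alpha> \<theta> u) u m else \<theta> u m)"
proof (induction w arbitrary: u)
  case (Suc w)
  then show ?case by (cases "u = w") (auto simp: Let_def less_Suc_eq)
qed simp

lemma qgrad_abs_le:
  assumes A: "\<forall>v<N. \<forall>l<L v. \<forall>u<N. \<forall>m<L u. \<bar>A v l u m\<bar> \<le> KA"
    and b: "\<forall>v<N. \<forall>l<L v. \<bar>b v l\<bar> \<le> KB"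
    and z: "\<forall>u<N. \<forall>m<L u. \<bar>z u m\<bar> \<le> Z"
    and KA: "0 \<le> KA" and v: "v < N" and l: "l < L v"
  shows "\<bar>qgrad N L A b z v l\<bar> \<le> bdim N L * KA * Z + KB"
proof -
  have "\<bar>bsum N L (\<lambda>u m. A v l u m * z u m)\<bar> \<le> bdim N L * (KA * Z)"
    using A z KA v l by (intro bsum_abs_le) (simp add: abs_mult mult_mono')
  moreover have "\<bar>b v l\<bar> \<le> KB" using b v l by blast
  ultimately show ?thesis
    unfolding qgrad_eq_bsum using abs_triangle_ineq[of _ "b v l"] by (simp add: mult.assoc)
qed

lemma gs_partial_abs_le:
  assumes A: "\<forall>v<N. \<forall>l<L v. \<forall>u<N. \<forall>m<L u. \<bar>A v l u m\<bar> \<le> KA"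
    and b: "\<forall>v<N. \<forall>l<L v. \<bar>b v l\<bar> \<le> KB"
    and \<theta>: "\<forall>u<N. \<forall>m<L u. \<bar>\<theta> u m\<bar> \<le> R"
    and KA: "0 \<le> KA" and KB: "0 \<le> KB" and R: "0 \<le> R" and \<alpha>: "0 \<le> \<alpha>" "\<alpha> \<le> c"
  shows "\<forall>u<N. \<forall>m<L u. \<bar>gs_partial N L A b \<alpha> \<theta> w u m\<bar> \<le> (1 + c * bdim N L * KA) ^ w * (R + w * c * KB)"
proof (induction w)
  case 0
  then show ?case using \<theta> by simp
next
  case (Suc w)
  define g where "g = 1 + c * bdim N L * KA"
  define Z where "Z = g ^ w * (R + w * c * KB)"
  have g: "1 \<le> g" unfolding g_def using KA \<alpha> bdim_nonneg by simp
  have Z: "0 \<le> Z" unfolding Z_def using g R KB \<alpha> by simp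
  have IH: "\<forall>u<N. \<forall>m<L u. \<bar>gs_partial N L A b \<alpha> \<theta> w u m\<bar> \<le> Z"
    using Suc.IH unfolding Z_def g_def .
  have "c * KB \<le> g ^ Suc w * (c * KB)"
    using mult_right_mono[OF one_le_power[OF g, of "Suc w"], of "c * KB"] KB \<alpha> by simp
  moreover have "g ^ Suc w * (R + Suc w * c * KB) = g * Z + g ^ Suc w * (c * KB)"
    unfolding Z_def by (simp add: algebra_simps)
  ultimately have grow: "g * Z + c * KB \<le> g ^ Suc w * (R + Suc w * c * KB)" by linarith
  have "Z \<le> g * Z + c * KB"
    using g Z KB \<alpha> by (simp add: mult_le_cancel_right1 add_increasing2)
  with grow have keep: "Z \<le> g ^ Suc w * (R + Suc w * c * KB)" by linarith
  show ?case
    unfolding g_def[symmetric]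
  proof (intro allI impI)
    fix u m assume u: "u < N" and m: "m < L u"
    show "\<bar>gs_partial N L A b \<alpha> \<theta> (Suc w) u m\<bar> \<le> g ^ Suc w * (R + Suc w * c * KB)"
    proof (cases "u = w")
      case True
      have "\<bar>\<alpha> * qgrad N L A b (gs_partial N L A b \<alpha> \<theta> w) w m\<bar> \<le> c * (bdim N L * KA * Z + KB)"
        using qgrad_abs_le[OF A b IH KA] True u m \<alpha> by (simp add: abs_mult mult_mono')
      moreover have "\<bar>gs_partial N L A b \<alpha> \<theta> w w m\<bar> \<le> Z" using IH True u m by blast
      ultimately show ?thesis
        using True m grow by (simp add: Let_def g_def algebra_simps)
    next
      case False
      have "\<bar>gs_partial N L A b \<alpha> \<theta> w u m\<bar> \<le> Z" using IH u m by blast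
      then show ?thesis using False keep by (simp add: Let_def)
    qed
  qed
qed

definition gs_grad_bound :: "nat \<Rightarrow> (nat \<Rightarrow> nat) \<Rightarrow> real \<Rightarrow> real \<Rightarrow> real \<Rightarrow> real \<Rightarrow> real" where
  "gs_grad_bound N L KA KB R c = bdim N L * KA * ((1 + c * bdim N L * KA) ^ N * (R + N * c * KB)) + KB"

lemma gs_partial_qgrad_abs_le:
  assumes A: "\<forall>v<N. \<forall>l<L v. \<forall>u<N. \<forall>m<L u. \<bar>A v l u m\<bar> \<le> KA"
    and b: "\<forall>v<N. \<forall>l<L v. \<bar>b v l\<bar> \<le> KB"
    and \<theta>: "\<forall>u<N. \<forall>m<L u. \<bar>\<theta> u m\<bar> \<le> R"
    and KA: "0 \<le> KA" and KB: "0 \<le> KB" and R: "0 \<le> R" and \<alpha>: "0 \<le> \<alpha>" "\<alpha> \<le> c"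
    and v: "v < N" and l: "l < L v"
  shows "\<bar>qgrad N L A b (gs_partial N L A b \<alpha> \<theta> v) v l\<bar> \<le> gs_grad_bound N L KA KB R c"
proof -
  define g where "g = 1 + c * bdim N L * KA"
  have g: "1 \<le> g" unfolding g_def using KA \<alpha> bdim_nonneg by simp
  have "g ^ v * (R + v * c * KB) \<le> g ^ N * (R + N * c * KB)"
    using g v KB R \<alpha> by (intro mult_mono power_increasing add_left_mono mult_right_mono) auto
  then have "\<forall>u<N. \<forall>m<L u. \<bar>gs_partial N L A b \<alpha> \<theta> v u m\<bar> \<le> g ^ N * (R + N * c * KB)"
    using gs_partial_abs_le[OF A b \<theta> KA KB R \<alpha>, of v] unfolding g_def[symmetric] by force
  from qgrad_abs_le[OF A b this KA v l] show ?thesis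
    unfolding gs_grad_bound_def g_def .
qed

lemma gs_sweep_coord_sq_le:
  assumes A: "\<forall>v<N. \<forall>l<L v. \<forall>u<N. \<forall>m<L u. \<bar>A v l u m\<bar> \<le> KA"
    and \<theta>: "\<forall>u<N. \<forall>m<L u. \<bar>\<theta> u m\<bar> \<le> R"
    and Q: "\<forall>v<N. \<forall>l<L v. \<bar>qgrad N L A b (gs_partial N L A b \<alpha> \<theta> v) v l\<bar> \<le> Q"
    and KA: "0 \<le> KA" and Q0: "0 \<le> Q" and \<alpha>: "0 \<le> \<alpha>" and v: "v < N" and l: "l < L v"
  shows "(gs_partial N L A b \<alpha> \<theta> N v l)\<^sup>2
           \<le> (\<theta> v l)\<^sup>2 - 2 * \<alpha> * (\<theta> v l * qgrad N L A b \<theta> v l)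
             + \<alpha>\<^sup>2 * (2 * R * bdim N L * KA * Q + Q\<^sup>2)"
proof -
  let ?z = "gs_partial N L A b \<alpha> \<theta>"
  define g where "g = qgrad N L A b \<theta> v l"
  \<comment> \<open>the error from evaluating the gradient at the partially updated point\<close>
  define d where "d = qgrad N L A b (?z v) v l - g"
  have "\<bar>?z v u m - \<theta> u m\<bar> \<le> \<alpha> * Q" if "u < N" "m < L u" for u m
    using Q that \<alpha> Q0 by (simp add: gs_partial_eq[of _ _ _ _ _ _ v] abs_mult mult_left_mono)
  then have "\<bar>bsum N L (\<lambda>u m. A v l u m * (?z v u m - \<theta> u m))\<bar> \<le> bdim N L * (KA * (\<alpha> * Q))"
    using A v l KA by (intro bsum_abs_le) (simp add: abs_mult mult_mono')
  moreover have "d = bsum N L (\<lambda>u m. A v l u m * (?z v u m - \<theta> u m))"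
    unfolding d_def g_def qgrad_eq_bsum bsum_def by (simp add: sum_subtractf right_diff_distrib)
  ultimately have d: "\<bar>d\<bar> \<le> \<alpha> * (bdim N L * KA * Q)" by (simp add: mult_ac)
  have "- (\<theta> v l * d) \<le> \<bar>\<theta> v l\<bar> * \<bar>d\<bar>"
    by (metis abs_ge_minus_self abs_mult)
  also have "\<dots> \<le> R * (\<alpha> * (bdim N L * KA * Q))"
    using \<theta> v l d by (intro mult_mono') auto
  finally have cross: "- (\<theta> v l * d) \<le> R * (\<alpha> * (bdim N L * KA * Q))" .
  have "\<bar>g + d\<bar> \<le> Q" using Q v l unfolding d_def by simp
  then have "\<bar>g + d\<bar>\<^sup>2 \<le> Q\<^sup>2" by (rule power_mono) simp
  then have sq: "(g + d)\<^sup>2 \<le> Q\<^sup>2" by simp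
  have step: "?z N v l = \<theta> v l - \<alpha> * (g + d)"
    using v l by (simp add: gs_partial_eq[of _ _ _ _ _ _ N] d_def)
  have "(?z N v l)\<^sup>2
      = (\<theta> v l)\<^sup>2 - 2 * \<alpha> * (\<theta> v l * g) + 2 * \<alpha> * (- (\<theta> v l * d)) + \<alpha>\<^sup>2 * (g + d)\<^sup>2"
    unfolding step by (simp add: power2_eq_square algebra_simps)
  also have "\<dots> \<le> (\<theta> v l)\<^sup>2 - 2 * \<alpha> * (\<theta> v l * g) + 2 * \<alpha> * (R * (\<alpha> * (bdim N L * KA * Q)))
      + \<alpha>\<^sup>2 * Q\<^sup>2"
    using cross sq \<alpha> by (intro add_mono mult_left_mono) auto
  finally show ?thesis
    unfolding g_def by (simp add: power2_eq_square algebra_simps)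
qed

lemma gs_sweep_sqnorm_le:
  assumes A: "\<forall>v<N. \<forall>l<L v. \<forall>u<N. \<forall>m<L u. \<bar>A v l u m\<bar> \<le> KA"
    and \<theta>: "\<forall>u<N. \<forall>m<L u. \<bar>\<theta> u m\<bar> \<le> R"
    and Q: "\<forall>v<N. \<forall>l<L v. \<bar>qgrad N L A b (gs_partial N L A b \<alpha> \<theta> v) v l\<bar> \<le> Q"
    and KA: "0 \<le> KA" and Q0: "0 \<le> Q" and \<alpha>: "0 \<le> \<alpha>"
  shows "bsqnorm N L (gs_partial N L A b \<alpha> \<theta> N)
           \<le> bsqnorm N L \<theta> - 2 * \<alpha> * binner N L \<theta> (qgrad N L A b \<theta>)
             + \<alpha>\<^sup>2 * (bdim N L * (2 * R * bdim N L * KA * Q + Q\<^sup>2))"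
proof -
  have "bsqnorm N L (gs_partial N L A b \<alpha> \<theta> N)
      \<le> bsum N L (\<lambda>v l. (\<theta> v l)\<^sup>2 - 2 * \<alpha> * (\<theta> v l * qgrad N L A b \<theta> v l)
            + \<alpha>\<^sup>2 * (2 * R * bdim N L * KA * Q + Q\<^sup>2))"
    unfolding bsqnorm_def using gs_sweep_coord_sq_le[OF A \<theta> Q KA Q0 \<alpha>] by (rule bsum_mono)
  then show ?thesis
    by (simp add: bsum_add bsum_diff bsum_mult_left bsum_const binner_def bsqnorm_def algebra_simps)
qed

section \<open>Recursive inequalities for real sequences\<close>

lemma not_harmonic_descent:
  fixes e :: "nat \<Rightarrow> real"
  assumes e: "\<And>t. 0 \<le> e t" and \<delta>: "0 < \<delta>"
  shows "\<not> (\<forall>t\<ge>T. e (Suc t) \<le> e t - \<delta> / real t)"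
proof
  assume desc: "\<forall>t\<ge>T. e (Suc t) \<le> e t - \<delta> / real t"
  have partial: "e (T + n) \<le> e T - \<delta> * (\<Sum>j<n. inverse (real (j + T)))" for n
  proof (induction n)
    case (Suc n)
    then show ?case
      using desc[rule_format, of "T + n"] by (simp add: field_simps add.commute)
  qed simp
  have "(\<Sum>j<n. inverse (real (j + T))) \<le> e T / \<delta>" for n
  proof -
    have "\<delta> * (\<Sum>j<n. inverse (real (j + T))) \<le> e T"
      using partial[of n] e[of "T + n"] by linarith
    then show ?thesis using \<delta> by (simp add: le_divide_eq mult.commute)
  qed
  then have "summable (\<lambda>j. inverse (real (j + T)))"
    by (intro summableI_nonneg_bounded) auto
  then have "summable (\<lambda>j. inverse (real j))"
    using summable_iff_shift[of "\<lambda>j. inverse (real j)" T] by simp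
  then show False using not_summable_harmonic by blast
qed

lemma chung_eventually_le:
  fixes e :: "nat \<Rightarrow> real"
  assumes e: "\<And>t. 0 \<le> e t" and a: "0 < a" and \<epsilon>: "0 < \<epsilon>"
    and rec: "\<And>t. T \<le> t \<Longrightarrow> e (Suc t) \<le> (1 - a / real t) * e t + K / (real t)\<^sup>2"
  shows "\<forall>\<^sub>F t in sequentially. e t \<le> \<epsilon>"
proof -
  have "\<forall>\<^sub>F t in sequentially. C \<le> real t" for C
    using filterlim_real_sequentially by (simp add: filterlim_at_top)
  then have "\<forall>\<^sub>F t in sequentially. T \<le> t \<and> 0 < real t \<and> a \<le> real t \<and> 2 * K / (a * \<epsilon>) \<le> real t"
    by (intro eventually_conj eventually_ge_at_top) (auto elim: eventually_mono)
  then obtain T' where T': "\<And>t. T' \<le> t \<Longrightarrow> T \<le> t \<and> 0 < real t \<and> a \<le> real t \<and> 2 * K / (a * \<epsilon>) \<le> real t"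
    by (auto simp: eventually_sequentially)
  \<comment> \<open>beyond \<open>T'\<close> the noise term is at most half of the contraction at level \<open>\<epsilon>\<close>\<close>
  have key: "e (Suc t) \<le> (1 - a / real t) * e t + (a * \<epsilon> / 2) / real t" if t: "T' \<le> t" for t
  proof -
    have "2 * K \<le> real t * (a * \<epsilon>)"
      using T'[OF t] a \<epsilon> by (simp add: pos_divide_le_eq)
    then have "K / (real t)\<^sup>2 \<le> (a * \<epsilon> / 2) / real t"
      using T'[OF t] by (simp add: power2_eq_square field_simps)
    then show ?thesis using rec[of t] T'[OF t] by simp
  qed
  have stay: "e (Suc t) \<le> \<epsilon>" if t: "T' \<le> t" and "e t \<le> \<epsilon>" for t
  proof -
    have "a / real t \<le> 1" using T'[OF t] by simp
    then have "(1 - a / real t) * e t \<le> (1 - a / real t) * \<epsilon>"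
      using \<open>e t \<le> \<epsilon>\<close> by (intro mult_left_mono) auto
    moreover have "(1 - a / real t) * \<epsilon> + (a * \<epsilon> / 2) / real t \<le> \<epsilon>"
      using a \<epsilon> T'[OF t] by (simp add: field_simps)
    ultimately show ?thesis using key[OF t] by linarith
  qed
  have "\<exists>t\<ge>T'. e t \<le> \<epsilon>"
  proof (rule ccontr)
    assume above: "\<not> (\<exists>t\<ge>T'. e t \<le> \<epsilon>)"
    have "e (Suc t) \<le> e t - (a * \<epsilon> / 2) / real t" if t: "T' \<le> t" for t
    proof -
      have "a / real t * \<epsilon> \<le> a / real t * e t"
        using above t a T'[OF t] by (intro mult_left_mono) auto
      then show ?thesis using key[OF t] by (simp add: algebra_simps)
    qed
    then show False using not_harmonic_descent[of e "a * \<epsilon> / 2" T'] e a \<epsilon> by auto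
  qed
  then obtain t0 where t0: "T' \<le> t0" "e t0 \<le> \<epsilon>" by blast
  have "e (t0 + n) \<le> \<epsilon>" for n
    by (induction n) (use t0 stay in auto)
  then show ?thesis
    unfolding eventually_sequentially by (metis le_add_diff_inverse)
qed

lemma chung_tendsto_zero:
  fixes e :: "nat \<Rightarrow> real"
  assumes e: "\<And>t. 0 \<le> e t" and a: "0 < a"
    and rec: "\<And>t. T \<le> t \<Longrightarrow> e (Suc t) \<le> (1 - a / real t) * e t + K / (real t)\<^sup>2"
  shows "e \<longlonglongrightarrow> 0"
proof (rule order_tendstoI)
  show "\<forall>\<^sub>F t in sequentially. r < e t" if "r < 0" for r
    using e that by (intro always_eventually) (metis less_le_trans)
  show "\<forall>\<^sub>F t in sequentially. e t < r" if "0 < r" for r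
  proof -
    have "\<forall>\<^sub>F t in sequentially. e t \<le> r / 2"
      using that by (intro chung_eventually_le[of e a "r / 2" T K] e a rec) auto
    then show ?thesis by eventually_elim (use that in simp)
  qed
qed

lemma abs_le_add_sq_div:
  fixes y \<epsilon> :: real
  assumes "0 < \<epsilon>"
  shows "\<bar>y\<bar> \<le> \<epsilon> + y\<^sup>2 / \<epsilon>"
proof -
  have "0 \<le> \<epsilon> * \<bar>y\<bar>" using assms by simp
  then have "\<epsilon> * \<bar>y\<bar> \<le> \<epsilon>\<^sup>2 + y\<^sup>2"
    using sum_squares_bound[of \<epsilon> "\<bar>y\<bar>"] by simp
  then show ?thesis
    using assms by (simp add: field_simps power2_eq_square)
qed

lemma tendsto_zero_of_eps_bound:
  fixes u g :: "nat \<Rightarrow> real"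
  assumes bound: "\<And>\<epsilon>. 0 < \<epsilon> \<Longrightarrow> \<forall>\<^sub>F t in sequentially. \<bar>u t\<bar> \<le> B * \<epsilon> + g t / \<epsilon>"
    and g: "g \<longlonglongrightarrow> 0" and B: "0 \<le> B"
  shows "u \<longlonglongrightarrow> 0"
proof (rule tendstoI)
  fix r :: real assume r: "0 < r"
  define \<epsilon> where "\<epsilon> = r / (2 * (B + 1))"
  have \<epsilon>: "0 < \<epsilon>" "B * \<epsilon> < r / 2" using r B by (auto simp: \<epsilon>_def field_simps)
  have "\<forall>\<^sub>F t in sequentially. \<bar>g t\<bar> < r * \<epsilon> / 2"
    using tendstoD[OF g, of "r * \<epsilon> / 2"] r \<epsilon> by simp
  with bound[OF \<epsilon>(1)] show "\<forall>\<^sub>F t in sequentially. dist (u t) 0 < r"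
  proof eventually_elim
    case (elim t)
    have "g t / \<epsilon> < r / 2" using elim(2) \<epsilon> by (simp add: divide_less_eq abs_less_iff)
    then have "\<bar>u t\<bar> < r" using elim(1) \<epsilon>(2) by linarith
    then show ?case by simp
  qed
qed

section \<open>Dependence of the iterates on the data\<close>

lemma avg_map_upt: "avg (map g [a..<b]) f = (\<Sum>i\<in>{a..<b}. f (g i)) / real (b - a)"
  unfolding avg_def by (simp add: interv_sum_list_conv_sum_set_nat comp_def)

lemma avg_prewin: "avg (prewin npre ypre t \<omega>) f = (\<Sum>i<npre. f (ypre t i \<omega>)) / real npre"
  unfolding prewin_def avg_map_upt by (simp add: atLeast0LessThan)

lemma avg_postwin: "avg (postwin npost ystr t \<omega>) f
   = (\<Sum>s\<in>{max 1 (t - npost)..t}. f (ystr s \<omega>)) / real (Suc t - max 1 (t - npost))"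
  unfolding postwin_def avg_map_upt by (simp add: atLeastLessThanSuc_atLeastAtMost)

lemma theta_eq_of_same_past:
  assumes "\<And>t i. 1 \<le> t \<Longrightarrow> t < s \<Longrightarrow> i < npre \<Longrightarrow> ypre t i \<omega> = ypre' t i \<omega>'"
    and "\<And>t. 1 \<le> t \<Longrightarrow> t < s \<Longrightarrow> ystr t \<omega> = ystr' t \<omega>'"
  shows "theta N W k x L lam gam npre npost ypre ystr c th1 s \<omega>
       = theta N W k x L lam gam npre npost ypre' ystr' c th1 s \<omega>'"
  using assms
proof (induction s)
  case (Suc t)
  have "prewin npre ypre t \<omega> = prewin npre ypre' t \<omega>'" if "t \<noteq> 0"
    unfolding prewin_def using Suc.prems(1)[of t] that by (intro map_cong) auto
  moreover have "postwin npost ystr t \<omega> = postwin npost ystr' t \<omega>'"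
    unfolding postwin_def using Suc.prems(2) by (intro map_cong) auto
  moreover have "theta N W k x L lam gam npre npost ypre ystr c th1 t \<omega>
      = theta N W k x L lam gam npre npost ypre' ystr' c th1 t \<omega>'"
    using Suc.prems by (intro Suc.IH) auto
  ultimately show ?case by (simp add: At_def bt_def)
qed simp

lemma bt_eq_of_same_window:
  assumes "\<And>i. i < npre \<Longrightarrow> ypre t i \<omega> = ypre' t i \<omega>'"
    and "\<And>s. max 1 (t - npost) \<le> s \<Longrightarrow> s \<le> t \<Longrightarrow> ystr s \<omega> = ystr' s \<omega>'"
  shows "bt k x npre npost ypre ystr t \<omega> = bt k x npre npost ypre' ystr' t \<omega>'"
proof -
  have "prewin npre ypre t \<omega> = prewin npre ypre' t \<omega>'"
    unfolding prewin_def using assms(1) by (intro map_cong) auto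
  moreover have "postwin npost ystr t \<omega> = postwin npost ystr' t \<omega>'"
    unfolding postwin_def using assms(2) by (intro map_cong) auto
  ultimately show ?thesis by (simp add: bt_def)
qed

lemma gs_partial_measurable:
  assumes A: "\<And>v l u m. v < N \<Longrightarrow> l < L v \<Longrightarrow> u < N \<Longrightarrow> m < L u \<Longrightarrow> (\<lambda>\<omega>. A \<omega> v l u m) \<in> borel_measurable M"
    and b: "\<And>v l. v < N \<Longrightarrow> l < L v \<Longrightarrow> (\<lambda>\<omega>. b \<omega> v l) \<in> borel_measurable M"
    and \<theta>: "\<And>v l. (\<lambda>\<omega>. \<theta> \<omega> v l) \<in> borel_measurable M"
    and w: "w \<le> N"
  shows "(\<lambda>\<omega>. gs_partial N L (A \<omega>) (b \<omega>) \<alpha> (\<theta> \<omega>) w v l) \<in> borel_measurable M"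
  using w
proof (induction w arbitrary: v l)
  case (Suc w)
  then have z: "(\<lambda>\<omega>. gs_partial N L (A \<omega>) (b \<omega>) \<alpha> (\<theta> \<omega>) w u m) \<in> borel_measurable M" for u m
    by simp
  have "(\<lambda>\<omega>. qgrad N L (A \<omega>) (b \<omega>) (gs_partial N L (A \<omega>) (b \<omega>) \<alpha> (\<theta> \<omega>) w) w l) \<in> borel_measurable M"
    if "l < L w"
    unfolding qgrad_def using A b z Suc.prems that
    by (intro borel_measurable_add borel_measurable_sum borel_measurable_times) auto
  then show ?case
    using z by (cases "v = w"; cases "l < L w") (simp_all add: Let_def)
qed (use \<theta> in simp)

definition past_obs :: "nat \<Rightarrow> nat \<Rightarrow> ((nat \<times> nat) + nat) set" where
  "past_obs npre s = {Inl (t, i) | t i. 1 \<le> t \<and> t < s \<and> i < npre} \<union> {Inr t | t. 1 \<le> t \<and> t < s}"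

definition window_obs :: "nat \<Rightarrow> nat \<Rightarrow> nat \<Rightarrow> ((nat \<times> nat) + nat) set" where
  "window_obs npre npost t = {Inl (t, i) | i. i < npre} \<union> {Inr s | s. max 1 (t - npost) \<le> s \<and> s \<le> t}"

lemma Inl_in_past_obs [simp]: "Inl (t, i) \<in> past_obs npre s \<longleftrightarrow> 1 \<le> t \<and> t < s \<and> i < npre"
  by (auto simp: past_obs_def)

lemma Inr_in_past_obs [simp]: "Inr t \<in> past_obs npre s \<longleftrightarrow> 1 \<le> t \<and> t < s"
  by (auto simp: past_obs_def)

lemma Inl_in_window_obs [simp]: "Inl (t', i) \<in> window_obs npre npost t \<longleftrightarrow> t' = t \<and> i < npre"
  by (auto simp: window_obs_def)

lemma Inr_in_window_obs [simp]: "Inr s \<in> window_obs npre npost t \<longleftrightarrow> max 1 (t - npost) \<le> s \<and> s \<le> t"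
  by (auto simp: window_obs_def)

lemma past_obs_disjoint_window_obs: "s + npost \<le> t \<Longrightarrow> past_obs npre s \<inter> window_obs npre npost t = {}"
  unfolding past_obs_def window_obs_def by auto

context
  fixes N :: nat and Xs :: "nat \<Rightarrow> 'a measure" and k :: "nat \<Rightarrow> 'a \<Rightarrow> 'a \<Rightarrow> real"
    and x :: "nat \<Rightarrow> nat \<Rightarrow> 'a" and L :: "nat \<Rightarrow> nat"
  assumes kmeas: "\<forall>v<N. (\<lambda>(a, b). k v a b) \<in> borel_measurable (Xs v \<Otimes>\<^sub>M Xs v)"
    and dict: "\<forall>v<N. \<forall>l<L v. x v l \<in> space (Xs v)"
begin

lemma feat_measurable:
  assumes Y: "Y \<in> M \<rightarrow>\<^sub>M PiM {..<N} Xs" and v: "v < N" and l: "l < L v"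
  shows "(\<lambda>\<omega>. feat k x v (Y \<omega>) l) \<in> borel_measurable M"
proof -
  have "(\<lambda>\<omega>. Y \<omega> v) \<in> M \<rightarrow>\<^sub>M Xs v"
    using measurable_compose[OF Y measurable_component_singleton[of v "{..<N}" Xs]] v
    by (simp add: comp_def)
  then have "(\<lambda>\<omega>. (Y \<omega> v, x v l)) \<in> M \<rightarrow>\<^sub>M Xs v \<Otimes>\<^sub>M Xs v"
    using dict v l by (intro measurable_Pair) auto
  moreover have "(\<lambda>(a, b). k v a b) \<in> borel_measurable (Xs v \<Otimes>\<^sub>M Xs v)" using kmeas v by simp
  ultimately show ?thesis
    unfolding feat_def by (simp add: measurable_compose)
qed

lemma At_measurable:
  assumes "\<And>i. i < npre \<Longrightarrow> ypre t i \<in> M \<rightarrow>\<^sub>M PiM {..<N} Xs"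
    and "v < N" "l < L v" "u < N" "m < L u"
  shows "(\<lambda>\<omega>. At N W k x lam gam npre ypre t \<omega> v l u m) \<in> borel_measurable M"
proof -
  have "(\<lambda>\<omega>. feat k x v (ypre t i \<omega>) l) \<in> borel_measurable M"
    if "i < npre" "v < N" "l < L v" for i v l
    using assms(1) that by (intro feat_measurable)
  then show ?thesis
    unfolding At_def Amat_def avg_prewin using assms by (cases "v = u") simp_all
qed

lemma bt_measurable:
  assumes "\<And>i. i < npre \<Longrightarrow> ypre t i \<in> M \<rightarrow>\<^sub>M PiM {..<N} Xs"
    and "\<And>s. max 1 (t - npost) \<le> s \<Longrightarrow> s \<le> t \<Longrightarrow> ystr s \<in> M \<rightarrow>\<^sub>M PiM {..<N} Xs"
    and "v < N" "l < L v"
  shows "(\<lambda>\<omega>. bt k x npre npost ypre ystr t \<omega> v l) \<in> borel_measurable M"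
  unfolding bt_def bvec_def avg_prewin avg_postwin using assms
  by (intro borel_measurable_diff borel_measurable_sum borel_measurable_divide borel_measurable_const)
    (auto simp: feat_measurable)

lemma theta_measurable:
  assumes "\<And>t i. 1 \<le> t \<Longrightarrow> t < s \<Longrightarrow> i < npre \<Longrightarrow> ypre t i \<in> M \<rightarrow>\<^sub>M PiM {..<N} Xs"
    and "\<And>t. 1 \<le> t \<Longrightarrow> t < s \<Longrightarrow> ystr t \<in> M \<rightarrow>\<^sub>M PiM {..<N} Xs"
  shows "(\<lambda>\<omega>. theta N W k x L lam gam npre npost ypre ystr c th1 s \<omega> v l) \<in> borel_measurable M"
  using assms
proof (induction s arbitrary: v l)
  case (Suc t)
  show ?case
  proof (cases "t = 0")
    case False
    have "(\<lambda>\<omega>. theta N W k x L lam gam npre npost ypre ystr c th1 t \<omega> v l) \<in> borel_measurable M" for v l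
      using Suc.prems by (intro Suc.IH) auto
    moreover have "(\<lambda>\<omega>. At N W k x lam gam npre ypre t \<omega> v l u m) \<in> borel_measurable M"
      if "v < N" "l < L v" "u < N" "m < L u" for v l u m
      using False Suc.prems that by (intro At_measurable) auto
    moreover have "(\<lambda>\<omega>. bt k x npre npost ypre ystr t \<omega> v l) \<in> borel_measurable M"
      if "v < N" "l < L v" for v l
      using False Suc.prems that by (intro bt_measurable) auto
    ultimately show ?thesis
      using False by (simp add: gs_partial_measurable)
  qed simp
qed simp

lemma theta_factors_through_past:
  obtains Y where "Y \<in> borel_measurable (PiM (past_obs npre s) (\<lambda>_. PiM {..<N} Xs))"
    and "\<And>\<omega>. theta N W k x L lam gam npre npost ypre ystr c th1 s \<omega> v l
           = Y (restrict (\<lambda>j. obs_family ypre ystr j \<omega>) (past_obs npre s))"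
proof
  let ?Y = "\<lambda>f. theta N W k x L lam gam npre npost
              (\<lambda>t i f. f (Inl (t, i))) (\<lambda>t f. f (Inr t)) c th1 s f v l"
  show "?Y \<in> borel_measurable (PiM (past_obs npre s) (\<lambda>_. PiM {..<N} Xs))"
    by (intro theta_measurable measurable_component_singleton) simp_all
  show "theta N W k x L lam gam npre npost ypre ystr c th1 s \<omega> v l
      = ?Y (restrict (\<lambda>j. obs_family ypre ystr j \<omega>) (past_obs npre s))" for \<omega>
    by (subst theta_eq_of_same_past[where ypre'="\<lambda>t i f. f (Inl (t, i))" and ystr'="\<lambda>t f. f (Inr t)"])
      (simp_all add: obs_family_def)
qed

lemma bt_factors_through_window:
  assumes "v < N" "l < L v"
  obtains Y where "Y \<in> borel_measurable (PiM (window_obs npre npost t) (\<lambda>_. PiM {..<N} Xs))"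
    and "\<And>\<omega>. bt k x npre npost ypre ystr t \<omega> v l
           = Y (restrict (\<lambda>j. obs_family ypre ystr j \<omega>) (window_obs npre npost t))"
proof
  let ?Y = "\<lambda>f. bt k x npre npost (\<lambda>t i f. f (Inl (t, i))) (\<lambda>t f. f (Inr t)) t f v l"
  show "?Y \<in> borel_measurable (PiM (window_obs npre npost t) (\<lambda>_. PiM {..<N} Xs))"
    using assms by (intro bt_measurable measurable_component_singleton) simp_all
  show "bt k x npre npost ypre ystr t \<omega> v l
      = ?Y (restrict (\<lambda>j. obs_family ypre ystr j \<omega>) (window_obs npre npost t))" for \<omega>
    by (subst bt_eq_of_same_window[where ypre'="\<lambda>t i f. f (Inl (t, i))" and ystr'="\<lambda>t f. f (Inr t)"])
      (simp_all add: obs_family_def)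
qed

end

section \<open>The iterates under the null hypothesis\<close>

declare theta.simps(2) [simp del]

locale null_model = prob_space \<M>
  for \<M> :: "'m measure" +
  fixes N :: nat and W :: "nat \<Rightarrow> nat \<Rightarrow> real"
    and Xs :: "nat \<Rightarrow> 'a measure" and P :: "(nat \<Rightarrow> 'a) measure"
    and k :: "nat \<Rightarrow> 'a \<Rightarrow> 'a \<Rightarrow> real" and Mb :: "nat \<Rightarrow> real"
    and x :: "nat \<Rightarrow> nat \<Rightarrow> 'a" and L :: "nat \<Rightarrow> nat"
    and lam gam c \<rho> :: real and npre npost :: nat
    and ypre :: "nat \<Rightarrow> nat \<Rightarrow> 'm \<Rightarrow> (nat \<Rightarrow> 'a)"
    and ystr :: "nat \<Rightarrow> 'm \<Rightarrow> (nat \<Rightarrow> 'a)"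
    and th1 :: "nat \<Rightarrow> nat \<Rightarrow> real"
  assumes W_nonneg: "\<forall>u<N. \<forall>v<N. 0 \<le> W u v"
    and W_sym: "\<forall>u<N. \<forall>v<N. W u v = W v u"
    and kern: "\<forall>v<N. reproducing_kernel (space (Xs v)) (k v)"
    and bnd: "\<forall>v<N. \<forall>a\<in>space (Xs v). \<forall>b\<in>space (Xs v). k v a b \<le> Mb v"
    and kmeas: "\<forall>v<N. (\<lambda>(a, b). k v a b) \<in> borel_measurable (Xs v \<Otimes>\<^sub>M Xs v)"
    and dict: "\<forall>v<N. \<forall>l<L v. x v l \<in> space (Xs v)"
    and indep: "indep_vars (\<lambda>_. PiM {..<N} Xs) (obs_family ypre ystr) (obs_index npre)"
    and distr: "\<forall>j\<in>obs_index npre. distr \<M> (PiM {..<N} Xs) (obs_family ypre ystr j) = P"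
    and npre: "0 < npre"
    and lam: "0 \<le> lam" and gam: "0 < gam" and c: "0 < c" and rho: "0 < \<rho>"
    and bounded: "\<forall>t\<ge>1. AE \<omega> in \<M>.
                    thnorm N L (theta N W k x L lam gam npre npost ypre ystr c th1 t \<omega>) \<le> \<rho>"
begin

abbreviation th where "th \<equiv> theta N W k x L lam gam npre npost ypre ystr c th1"
abbreviation Att where "Att \<equiv> At N W k x lam gam npre ypre"
abbreviation btt where "btt \<equiv> bt k x npre npost ypre ystr"

definition "feat_bound = (\<Sum>v<N. \<bar>Mb v\<bar>)"
definition "A_bound = feat_bound\<^sup>2 * (1 + lam * (\<Sum>v<N. \<Sum>u<N. \<bar>glap N W v u\<bar>)) + gam"
definition "b_bound = 2 * feat_bound"
definition "grad_bound = gs_grad_bound N L A_bound b_bound \<rho> c"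
definition "step_bound = bdim N L * (2 * \<rho> * bdim N L * A_bound * grad_bound + grad_bound\<^sup>2)"

lemma bounds_nonneg: "0 \<le> feat_bound" "0 \<le> A_bound" "0 \<le> b_bound" "0 \<le> grad_bound"
proof -
  show f: "0 \<le> feat_bound" by (simp add: feat_bound_def sum_nonneg)
  show A: "0 \<le> A_bound" using lam gam by (simp add: A_bound_def sum_nonneg)
  show b: "0 \<le> b_bound" using f by (simp add: b_bound_def)
  show "0 \<le> grad_bound"
    using f A b c rho bdim_nonneg by (simp add: grad_bound_def gs_grad_bound_def)
qed

lemma obs_measurable: "j \<in> obs_index npre \<Longrightarrow> obs_family ypre ystr j \<in> \<M> \<rightarrow>\<^sub>M PiM {..<N} Xs"
  using indep unfolding indep_vars_def by auto

lemma ypre_measurable: "1 \<le> t \<Longrightarrow> i < npre \<Longrightarrow> ypre t i \<in> \<M> \<rightarrow>\<^sub>M PiM {..<N} Xs"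
  using obs_measurable[of "Inl (t, i)"] by (simp add: obs_family_def obs_index_def)

lemma ystr_measurable: "1 \<le> s \<Longrightarrow> ystr s \<in> \<M> \<rightarrow>\<^sub>M PiM {..<N} Xs"
  using obs_measurable[of "Inr s"] by (simp add: obs_family_def obs_index_def)

lemma th_measurable: "(\<lambda>\<omega>. th t \<omega> v l) \<in> borel_measurable \<M>"
  by (rule theta_measurable[OF kmeas dict]) (auto intro: ypre_measurable ystr_measurable)

lemma btt_measurable: "1 \<le> t \<Longrightarrow> v < N \<Longrightarrow> l < L v \<Longrightarrow> (\<lambda>\<omega>. btt t \<omega> v l) \<in> borel_measurable \<M>"
  by (rule bt_measurable[OF kmeas dict]) (auto intro: ypre_measurable ystr_measurable)

lemma feat_abs_le:
  assumes y: "y \<in> space (PiM {..<N} Xs)" and v: "v < N" and l: "l < L v"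
  shows "\<bar>feat k x v y l\<bar> \<le> feat_bound"
proof -
  have "\<bar>k v (y v) (x v l)\<bar> \<le> Mb v"
    using reproducing_kernel_abs_le[of "space (Xs v)" "k v" "y v" "x v l" "Mb v"] y v l kern bnd dict
    by (auto simp: space_PiM PiE_iff)
  also have "\<dots> \<le> \<bar>Mb v\<bar>" by simp
  also have "\<dots> \<le> feat_bound"
    unfolding feat_bound_def using v by (intro member_le_sum) auto
  finally show ?thesis unfolding feat_def .
qed

lemma prewin_in_space:
  "\<omega> \<in> space \<M> \<Longrightarrow> 1 \<le> t \<Longrightarrow> y \<in> set (prewin npre ypre t \<omega>) \<Longrightarrow> y \<in> space (PiM {..<N} Xs)"
  using measurable_space[OF ypre_measurable] by (auto simp: prewin_def)

lemma postwin_in_space: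
  "\<omega> \<in> space \<M> \<Longrightarrow> y \<in> set (postwin npost ystr t \<omega>) \<Longrightarrow> y \<in> space (PiM {..<N} Xs)"
  using measurable_space[OF ystr_measurable] by (auto simp: postwin_def)

lemma Att_abs_le:
  assumes \<omega>: "\<omega> \<in> space \<M>" and t: "1 \<le> t" and "v < N" "l < L v" "u < N" "m < L u"
  shows "\<bar>Att t \<omega> v l u m\<bar> \<le> A_bound"
proof -
  let ?G = "\<Sum>v<N. \<Sum>u<N. \<bar>glap N W v u\<bar>"
  have G: "\<bar>glap N W v u\<bar> \<le> ?G"
    using assms by (intro order_trans[OF _ member_le_sum[of v]] member_le_sum) (auto intro: sum_nonneg)
  have f: "\<bar>feat k x v y l\<bar> \<le> feat_bound" "\<bar>feat k x u y m\<bar> \<le> feat_bound"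
    if "y \<in> set (prewin npre ypre t \<omega>)" for y
    using feat_abs_le prewin_in_space[OF \<omega> t that] assms by auto
  have "\<bar>avg (prewin npre ypre t \<omega>) (\<lambda>y. (if v = u then feat k x v y l * feat k x v y m else 0)
          + lam * (feat k x v y l * glap N W v u * feat k x u y m))\<bar>
      \<le> feat_bound\<^sup>2 * (1 + lam * ?G)"
  proof (rule avg_abs_le)
    fix y assume y: "y \<in> set (prewin npre ypre t \<omega>)"
    have "\<bar>if v = u then feat k x v y l * feat k x v y m else 0\<bar> \<le> feat_bound\<^sup>2"
      using f[OF y] bounds_nonneg by (cases "v = u") (simp_all add: abs_mult power2_eq_square mult_mono')
    moreover have "\<bar>feat k x v y l * glap N W v u * feat k x u y m\<bar> \<le> feat_bound * ?G * feat_bound"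
      unfolding abs_mult using f[OF y] G bounds_nonneg by (intro mult_mono) auto
    then have "\<bar>lam * (feat k x v y l * glap N W v u * feat k x u y m)\<bar> \<le> lam * (feat_bound\<^sup>2 * ?G)"
      using lam by (simp add: abs_mult power2_eq_square mult_left_mono mult_ac)
    ultimately show "\<bar>(if v = u then feat k x v y l * feat k x v y m else 0)
          + lam * (feat k x v y l * glap N W v u * feat k x u y m)\<bar> \<le> feat_bound\<^sup>2 * (1 + lam * ?G)"
      by (simp add: algebra_simps abs_triangle_ineq order_trans[OF abs_triangle_ineq])
  qed (use lam in \<open>simp add: sum_nonneg\<close>)
  then show ?thesis
    unfolding At_def Amat_def A_bound_def
    by (rule order_trans[OF abs_triangle_ineq add_mono]) (use gam in simp)
qed

lemma btt_abs_le:
  assumes \<omega>: "\<omega> \<in> space \<M>" and t: "1 \<le> t" and "v < N" "l < L v"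
  shows "\<bar>btt t \<omega> v l\<bar> \<le> b_bound"
proof -
  have "\<bar>avg (prewin npre ypre t \<omega>) (\<lambda>y. feat k x v y l)\<bar> \<le> feat_bound"
    using prewin_in_space[OF \<omega> t] feat_abs_le assms bounds_nonneg by (intro avg_abs_le) auto
  moreover have "\<bar>avg (postwin npost ystr t \<omega>) (\<lambda>y. feat k x v y l)\<bar> \<le> feat_bound"
    using postwin_in_space[OF \<omega>] feat_abs_le assms bounds_nonneg by (intro avg_abs_le) auto
  ultimately show ?thesis unfolding bt_def bvec_def b_bound_def by linarith
qed

lemma theta_Suc:
  "1 \<le> t \<Longrightarrow> th (Suc t) \<omega> = gs_partial N L (Att t \<omega>) (btt t \<omega>) (c / real t) (th t \<omega>) N"
  by (simp add: theta.simps)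

lemma sweep_qgrad_abs_le:
  assumes \<omega>: "\<omega> \<in> space \<M>" and t: "1 \<le> t" and \<theta>: "thnorm N L (th t \<omega>) \<le> \<rho>"
    and v: "v < N" and l: "l < L v"
  shows "\<bar>qgrad N L (Att t \<omega>) (btt t \<omega>) (gs_partial N L (Att t \<omega>) (btt t \<omega>) (c / real t) (th t \<omega>) v) v l\<bar>
           \<le> grad_bound"
  unfolding grad_bound_def
  using Att_abs_le[OF \<omega> t] btt_abs_le[OF \<omega> t] abs_le_of_thnorm_le[OF \<theta>] bounds_nonneg rho c t v l
  by (intro gs_partial_qgrad_abs_le) (auto simp: divide_le_eq)

lemma theta_increment_abs_le:
  assumes \<omega>: "\<omega> \<in> space \<M>" and t: "1 \<le> t" and \<theta>: "thnorm N L (th t \<omega>) \<le> \<rho>"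
    and v: "v < N" and l: "l < L v"
  shows "\<bar>th (Suc t) \<omega> v l - th t \<omega> v l\<bar> \<le> c / real t * grad_bound"
  using sweep_qgrad_abs_le[OF assms] v l c
  by (simp add: theta_Suc[OF t] gs_partial_eq[of _ _ _ _ _ _ N] abs_mult mult_left_mono
      divide_right_mono)

lemma bsqnorm_theta_Suc_le:
  assumes \<omega>: "\<omega> \<in> space \<M>" and t: "1 \<le> t" and \<theta>: "thnorm N L (th t \<omega>) \<le> \<rho>"
  shows "bsqnorm N L (th (Suc t) \<omega>)
           \<le> (1 - 2 * (c / real t) * gam) * bsqnorm N L (th t \<omega>)
             - 2 * (c / real t) * binner N L (th t \<omega>) (btt t \<omega>) + (c / real t)\<^sup>2 * step_bound"
proof -
  define \<alpha> where "\<alpha> = c / real t"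
  have \<alpha>: "0 \<le> \<alpha>" using c by (simp add: \<alpha>_def)
  have "bsqnorm N L (th (Suc t) \<omega>)
      \<le> bsqnorm N L (th t \<omega>) - 2 * \<alpha> * binner N L (th t \<omega>) (qgrad N L (Att t \<omega>) (btt t \<omega>) (th t \<omega>))
        + \<alpha>\<^sup>2 * step_bound"
    unfolding theta_Suc[OF t] step_bound_def \<alpha>_def
    using Att_abs_le[OF \<omega> t] abs_le_of_thnorm_le[OF \<theta>] sweep_qgrad_abs_le[OF \<omega> t \<theta>] bounds_nonneg c
    by (intro gs_sweep_sqnorm_le) auto
  moreover have "gam * bsqnorm N L (th t \<omega>) + binner N L (th t \<omega>) (btt t \<omega>)
      \<le> binner N L (th t \<omega>) (qgrad N L (Att t \<omega>) (btt t \<omega>) (th t \<omega>))"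
    unfolding binner_qgrad At_def using Amat_coercive[OF W_nonneg W_sym lam] by simp
  then have "2 * \<alpha> * (gam * bsqnorm N L (th t \<omega>) + binner N L (th t \<omega>) (btt t \<omega>))
      \<le> 2 * \<alpha> * binner N L (th t \<omega>) (qgrad N L (Att t \<omega>) (btt t \<omega>) (th t \<omega>))"
    using \<alpha> by (intro mult_left_mono) auto
  ultimately show ?thesis
    unfolding \<alpha>_def[symmetric] by (simp add: algebra_simps)
qed

lemma AE_theta_bounded: "AE \<omega> in \<M>. \<forall>t\<ge>1. thnorm N L (th t \<omega>) \<le> \<rho>"
  using bounded by (subst AE_all_countable) (auto intro: AE_impI)

lemma theta_drift_le:
  assumes \<omega>: "\<omega> \<in> space \<M>" and bd: "\<forall>t\<ge>1. thnorm N L (th t \<omega>) \<le> \<rho>" and s: "1 \<le> s"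
    and v: "v < N" and l: "l < L v"
  shows "\<bar>th (s + n) \<omega> v l - th s \<omega> v l\<bar> \<le> n * (c / real s * grad_bound)"
proof (induction n)
  case (Suc n)
  have "\<bar>th (Suc (s + n)) \<omega> v l - th (s + n) \<omega> v l\<bar> \<le> c / real (s + n) * grad_bound"
    using theta_increment_abs_le[OF \<omega> _ _ v l, of "s + n"] bd s by simp
  also have "\<dots> \<le> c / real s * grad_bound"
    using c s bounds_nonneg by (intro mult_right_mono divide_left_mono) auto
  finally have "\<bar>th (Suc (s + n)) \<omega> v l - th (s + n) \<omega> v l\<bar> \<le> c / real s * grad_bound" .
  moreover have "\<bar>th (Suc (s + n)) \<omega> v l - th s \<omega> v l\<bar>
      \<le> \<bar>th (Suc (s + n)) \<omega> v l - th (s + n) \<omega> v l\<bar> + \<bar>th (s + n) \<omega> v l - th s \<omega> v l\<bar>"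
    by arith
  ultimately show ?case
    using Suc.IH by (simp only: add_Suc_right of_nat_Suc distrib_right mult_1)
qed simp

lemma binner_delay_abs_le:
  assumes \<omega>: "\<omega> \<in> space \<M>" and bd: "\<forall>t\<ge>1. thnorm N L (th t \<omega>) \<le> \<rho>" and s: "1 \<le> s"
  shows "\<bar>binner N L (th (s + npost) \<omega>) (btt (s + npost) \<omega>) - binner N L (th s \<omega>) (btt (s + npost) \<omega>)\<bar>
           \<le> bdim N L * (npost * (c / real s * grad_bound) * b_bound)"
proof -
  let ?t = "s + npost"
  have "\<bar>(th ?t \<omega> v l - th s \<omega> v l) * btt ?t \<omega> v l\<bar> \<le> npost * (c / real s * grad_bound) * b_bound"
    if "v < N" "l < L v" for v l
    unfolding abs_mult
    using theta_drift_le[OF \<omega> bd s that] btt_abs_le[OF \<omega> _ that, of ?t] s c bounds_nonneg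
    by (intro mult_mono) auto
  then have "\<bar>binner N L (\<lambda>v l. th ?t \<omega> v l - th s \<omega> v l) (btt ?t \<omega>)\<bar>
      \<le> bdim N L * (npost * (c / real s * grad_bound) * b_bound)"
    unfolding binner_def by (rule bsum_abs_le)
  then show ?thesis
    by (simp add: binner_def bsum_def sum_subtractf left_diff_distrib)
qed

definition "rec_const = c\<^sup>2 * (4 * bdim N L * npost * grad_bound * b_bound + step_bound)"

lemma bsqnorm_theta_Suc_le_delayed:
  assumes \<omega>: "\<omega> \<in> space \<M>" and bd: "\<forall>t\<ge>1. thnorm N L (th t \<omega>) \<le> \<rho>" and t: "2 * npost + 1 \<le> t"
  shows "bsqnorm N L (th (Suc t) \<omega>)
           \<le> (1 - 2 * c * gam / real t) * bsqnorm N L (th t \<omega>)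
             - 2 * (c / real t) * binner N L (th (t - npost) \<omega>) (btt t \<omega>) + rec_const / (real t)\<^sup>2"
proof -
  define s where "s = t - npost"
  have s: "1 \<le> s" "t = s + npost" "real t \<le> 2 * real s" using t by (auto simp: s_def)
  define D where "D = bdim N L * (npost * (c / real s * grad_bound) * b_bound)"
  \<comment> \<open>\<open>\<theta>\<^sub>s\<close> is independent of \<open>b\<^sub>t\<close>; the price of replacing \<open>\<theta>\<^sub>t\<close> by it is the drift over \<open>npost\<close> steps\<close>
  have "binner N L (th s \<omega>) (btt t \<omega>) - binner N L (th t \<omega>) (btt t \<omega>) \<le> D"
    using binner_delay_abs_le[OF \<omega> bd s(1)] unfolding D_def s(2)[symmetric] by (simp add: abs_le_iff)
  then have "2 * (c / real t) * (binner N L (th s \<omega>) (btt t \<omega>) - binner N L (th t \<omega>) (btt t \<omega>))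
      \<le> 2 * (c / real t) * D"
    using c by (intro mult_left_mono) auto
  then have "- 2 * (c / real t) * binner N L (th t \<omega>) (btt t \<omega>)
      \<le> - 2 * (c / real t) * binner N L (th s \<omega>) (btt t \<omega>) + 2 * (c / real t) * D"
    by (simp add: right_diff_distrib)
  moreover have "2 * (c / real t) * D \<le> c\<^sup>2 * (4 * bdim N L * npost * grad_bound * b_bound) / (real t)\<^sup>2"
  proof -
    define P where "P = 2 * c\<^sup>2 * bdim N L * npost * grad_bound * b_bound / real t"
    have "0 \<le> P" using bdim_nonneg bounds_nonneg by (simp add: P_def)
    moreover have "1 / real s \<le> 2 / real t" using s by (simp add: field_simps)
    ultimately have "P * (1 / real s) \<le> P * (2 / real t)" by (rule mult_left_mono[rotated])
    moreover have "2 * (c / real t) * D = P * (1 / real s)"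
      by (simp add: P_def D_def power2_eq_square)
    moreover have "P * (2 / real t) = c\<^sup>2 * (4 * bdim N L * npost * grad_bound * b_bound) / (real t)\<^sup>2"
      by (simp add: P_def power2_eq_square)
    ultimately show ?thesis by simp
  qed
  moreover have "bsqnorm N L (th (Suc t) \<omega>)
      \<le> (1 - 2 * (c / real t) * gam) * bsqnorm N L (th t \<omega>)
        - 2 * (c / real t) * binner N L (th t \<omega>) (btt t \<omega>) + (c / real t)\<^sup>2 * step_bound"
    using bsqnorm_theta_Suc_le[OF \<omega> _ bd[rule_format]] t by simp
  moreover have "(c / real t)\<^sup>2 * step_bound
      + c\<^sup>2 * (4 * bdim N L * npost * grad_bound * b_bound) / (real t)\<^sup>2
      = rec_const / (real t)\<^sup>2"
    by (simp add: rec_const_def power_divide add_divide_distrib algebra_simps)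
  ultimately show ?thesis
    unfolding s_def by (simp add: algebra_simps)
qed

lemma integrable_th:
  assumes "1 \<le> t" "v < N" "l < L v"
  shows "integrable \<M> (\<lambda>\<omega>. th t \<omega> v l)"
proof (rule integrable_const_bound[where B=\<rho>])
  show "AE \<omega> in \<M>. norm (th t \<omega> v l) \<le> \<rho>"
    using AE_theta_bounded by eventually_elim (use abs_le_of_thnorm_le assms in auto)
qed (rule th_measurable)

lemma integrable_btt: "1 \<le> t \<Longrightarrow> v < N \<Longrightarrow> l < L v \<Longrightarrow> integrable \<M> (\<lambda>\<omega>. btt t \<omega> v l)"
  using btt_abs_le btt_measurable by (intro integrable_const_bound[where B=b_bound] AE_I2) auto

lemma integrable_th_mult_btt:
  assumes "1 \<le> s" "1 \<le> t" "v < N" "l < L v"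
  shows "integrable \<M> (\<lambda>\<omega>. th s \<omega> v l * btt t \<omega> v l)"
proof (rule integrable_const_bound[where B="\<rho> * b_bound"])
  show "AE \<omega> in \<M>. norm (th s \<omega> v l * btt t \<omega> v l) \<le> \<rho> * b_bound"
    using AE_theta_bounded AE_space
  proof eventually_elim
    case (elim \<omega>)
    then show ?case
      using abs_le_of_thnorm_le[of N L "th s \<omega>"] btt_abs_le[of \<omega> t v l] assms rho
      by (auto simp: abs_mult intro!: mult_mono)
  qed
qed (use assms th_measurable btt_measurable in auto)

lemma integrable_bsqnorm_th:
  assumes "1 \<le> t"
  shows "integrable \<M> (\<lambda>\<omega>. bsqnorm N L (th t \<omega>))"
proof (rule integrable_const_bound[where B="\<rho>\<^sup>2"])
  show "AE \<omega> in \<M>. norm (bsqnorm N L (th t \<omega>)) \<le> \<rho>\<^sup>2"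
    using AE_theta_bounded by eventually_elim (use bsqnorm_nonneg bsqnorm_le_of_thnorm_le assms in auto)
qed (unfold bsqnorm_def bsum_def, intro borel_measurable_sum borel_measurable_power th_measurable)

lemma integrable_binner_th_btt:
  "1 \<le> s \<Longrightarrow> 1 \<le> t \<Longrightarrow> integrable \<M> (\<lambda>\<omega>. binner N L (th s \<omega>) (btt t \<omega>))"
  unfolding binner_def bsum_def by (intro Bochner_Integration.integrable_sum integrable_th_mult_btt) auto

lemma integral_btt_eq_0:
  assumes t: "1 \<le> t" and v: "v < N" and l: "l < L v"
  shows "(\<integral>\<omega>. btt t \<omega> v l \<partial>\<M>) = 0"
proof -
  define f where "f y = feat k x v y l" for y
  have f_meas: "f \<in> borel_measurable (PiM {..<N} Xs)"
    unfolding f_def using measurable_ident_sets[OF refl] v l by (rule feat_measurable[OF kmeas dict])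
  \<comment> \<open>under the null every observation has law \<open>P\<close>, so every feature average has the same mean\<close>
  have mean: "(\<integral>\<omega>. f (obs_family ypre ystr j \<omega>) \<partial>\<M>) = integral\<^sup>L P f" if "j \<in> obs_index npre" for j
    using integral_distr[OF obs_measurable[OF that] f_meas] distr that by simp
  have int: "integrable \<M> (\<lambda>\<omega>. f (obs_family ypre ystr j \<omega>))" if "j \<in> obs_index npre" for j
    using feat_abs_le[OF measurable_space[OF obs_measurable[OF that]] v l]
      measurable_compose[OF obs_measurable[OF that] f_meas] bounds_nonneg
    by (intro integrable_const_bound[where B=feat_bound] AE_I2) (auto simp: f_def)
  have pre: "integrable \<M> (\<lambda>\<omega>. f (ypre t i \<omega>)) \<and> (\<integral>\<omega>. f (ypre t i \<omega>) \<partial>\<M>) = integral\<^sup>L P f"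
    if "i < npre" for i
    using int[of "Inl (t, i)"] mean[of "Inl (t, i)"] t that by (simp add: obs_family_def obs_index_def)
  have post: "integrable \<M> (\<lambda>\<omega>. f (ystr s \<omega>)) \<and> (\<integral>\<omega>. f (ystr s \<omega>) \<partial>\<M>) = integral\<^sup>L P f"
    if "s \<in> {max 1 (t - npost)..t}" for s
    using int[of "Inr s"] mean[of "Inr s"] that by (simp add: obs_family_def obs_index_def)
  have "(\<integral>\<omega>. btt t \<omega> v l \<partial>\<M>)
      = (\<Sum>i<npre. integral\<^sup>L P f) / real npre
        - (\<Sum>s\<in>{max 1 (t - npost)..t}. integral\<^sup>L P f) / real (Suc t - max 1 (t - npost))"
    unfolding bt_def bvec_def avg_prewin avg_postwin f_def[symmetric] using pre post
    by (subst Bochner_Integration.integral_diff)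
      (auto intro!: Bochner_Integration.integrable_sum simp: Bochner_Integration.integral_sum)
  also have "\<dots> = 0" using npre t by simp
  finally show ?thesis .
qed

lemma indep_theta_btt:
  assumes s: "1 \<le> s" and st: "s + npost \<le> t" and v: "v < N" and l: "l < L v"
  shows "indep_var borel (\<lambda>\<omega>. th s \<omega> v l) borel (\<lambda>\<omega>. btt t \<omega> v l)"
proof -
  obtain Y1 where Y1: "Y1 \<in> borel_measurable (PiM (past_obs npre s) (\<lambda>_. PiM {..<N} Xs))"
    "\<And>\<omega>. th s \<omega> v l = Y1 (restrict (\<lambda>j. obs_family ypre ystr j \<omega>) (past_obs npre s))"
    by (rule theta_factors_through_past[OF kmeas dict]) auto
  obtain Y2 where Y2: "Y2 \<in> borel_measurable (PiM (window_obs npre npost t) (\<lambda>_. PiM {..<N} Xs))"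
    "\<And>\<omega>. btt t \<omega> v l = Y2 (restrict (\<lambda>j. obs_family ypre ystr j \<omega>) (window_obs npre npost t))"
    by (rule bt_factors_through_window[OF kmeas dict v l]) auto
  have "past_obs npre s \<subseteq> obs_index npre" "window_obs npre npost t \<subseteq> obs_index npre"
    using s st by (auto simp: past_obs_def window_obs_def obs_index_def)
  from indep_var_restrict[OF indep past_obs_disjoint_window_obs[OF st] this]
  have "indep_var borel (Y1 \<circ> (\<lambda>\<omega>. restrict (\<lambda>j. obs_family ypre ystr j \<omega>) (past_obs npre s)))
      borel (Y2 \<circ> (\<lambda>\<omega>. restrict (\<lambda>j. obs_family ypre ystr j \<omega>) (window_obs npre npost t)))"
    using Y1(1) Y2(1) by (rule indep_var_compose)
  then show ?thesis unfolding Y1(2) Y2(2) by (simp add: comp_def)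
qed

lemma integral_binner_theta_btt_eq_0:
  assumes s: "1 \<le> s" and st: "s + npost \<le> t"
  shows "(\<integral>\<omega>. binner N L (th s \<omega>) (btt t \<omega>) \<partial>\<M>) = 0"
proof -
  have t: "1 \<le> t" using s st by simp
  have "(\<integral>\<omega>. th s \<omega> v l * btt t \<omega> v l \<partial>\<M>) = 0" if "v < N" "l < L v" for v l
    using indep_var_lebesgue_integral[OF indep_theta_btt[OF s st that] integrable_th[OF s that]
        integrable_btt[OF t that]] integral_btt_eq_0[OF t that] by simp
  then have "(\<Sum>v<N. \<Sum>l<L v. \<integral>\<omega>. th s \<omega> v l * btt t \<omega> v l \<partial>\<M>) = 0"
    by simp
  moreover have "(\<integral>\<omega>. binner N L (th s \<omega>) (btt t \<omega>) \<partial>\<M>)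
      = (\<Sum>v<N. \<Sum>l<L v. \<integral>\<omega>. th s \<omega> v l * btt t \<omega> v l \<partial>\<M>)"
    unfolding binner_def bsum_def using integrable_th_mult_btt[OF s t]
    by (subst Bochner_Integration.integral_sum)
      (auto intro!: Bochner_Integration.integrable_sum Bochner_Integration.integral_sum)
  ultimately show ?thesis by simp
qed

definition "msq t = (\<integral>\<omega>. bsqnorm N L (th t \<omega>) \<partial>\<M>)"

lemma msq_Suc_le:
  assumes t: "2 * npost + 1 \<le> t"
  shows "msq (Suc t) \<le> (1 - 2 * c * gam / real t) * msq t + rec_const / (real t)\<^sup>2"
proof -
  have t1: "1 \<le> t" and s1: "1 \<le> t - npost" and st: "t - npost + npost \<le> t" using t by auto
  have "msq (Suc t) \<le> (\<integral>\<omega>. (1 - 2 * c * gam / real t) * bsqnorm N L (th t \<omega>)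
      - 2 * (c / real t) * binner N L (th (t - npost) \<omega>) (btt t \<omega>) + rec_const / (real t)\<^sup>2 \<partial>\<M>)"
    unfolding msq_def
  proof (rule integral_mono_AE)
    show "AE \<omega> in \<M>. bsqnorm N L (th (Suc t) \<omega>) \<le> (1 - 2 * c * gam / real t) * bsqnorm N L (th t \<omega>)
      - 2 * (c / real t) * binner N L (th (t - npost) \<omega>) (btt t \<omega>) + rec_const / (real t)\<^sup>2"
      using AE_theta_bounded AE_space by eventually_elim (rule bsqnorm_theta_Suc_le_delayed[OF _ _ t])
  qed (use integrable_bsqnorm_th integrable_binner_th_btt t1 s1 in auto)
  also have "\<dots> = (1 - 2 * c * gam / real t) * msq t + rec_const / (real t)\<^sup>2"
    using integrable_bsqnorm_th[OF t1] integrable_binner_th_btt[OF s1 t1]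
      integral_binner_theta_btt_eq_0[OF s1 st]
    by (simp add: msq_def prob_space)
  finally show ?thesis .
qed

lemma msq_tendsto_0: "msq \<longlonglongrightarrow> 0"
  using c gam msq_Suc_le bsqnorm_nonneg
  by (intro chung_tendsto_zero[where a="2 * c * gam" and K=rec_const and T="2 * npost + 1"])
    (auto simp: msq_def intro: Bochner_Integration.integral_nonneg)

abbreviation gh where "gh \<equiv> ghat N W k x L lam gam npre npost ypre ystr c th1"

lemma ghat_abs_le:
  assumes \<omega>: "\<omega> \<in> space \<M>" and t: "1 \<le> t" and v: "v < N" and \<epsilon>: "0 < \<epsilon>"
  shows "\<bar>gh t \<omega> v\<bar> \<le> feat_bound * (real (L v) * \<epsilon> + bsqnorm N L (th (Suc t) \<omega>) / \<epsilon>)"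
  unfolding ghat_def
proof (rule avg_abs_le)
  fix y assume y: "y \<in> set (prewin npre ypre t \<omega>)"
  let ?\<theta> = "th (Suc t) \<omega>"
  have "\<bar>\<Sum>l<L v. feat k x v y l * ?\<theta> v l\<bar> \<le> (\<Sum>l<L v. feat_bound * (\<epsilon> + (?\<theta> v l)\<^sup>2 / \<epsilon>))"
    using feat_abs_le[OF prewin_in_space[OF \<omega> t y] v] abs_le_add_sq_div[OF \<epsilon>] bounds_nonneg
    by (intro order_trans[OF sum_abs] sum_mono) (auto simp: abs_mult intro!: mult_mono)
  also have "\<dots> = feat_bound * (real (L v) * \<epsilon> + (\<Sum>l<L v. (?\<theta> v l)\<^sup>2) / \<epsilon>)"
    by (simp add: sum_distrib_left sum.distrib sum_divide_distrib distrib_left)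
  also have "\<dots> \<le> feat_bound * (real (L v) * \<epsilon> + bsqnorm N L ?\<theta> / \<epsilon>)"
    using block_sqnorm_le_bsqnorm[OF v] \<epsilon> bounds_nonneg
    by (intro mult_left_mono add_left_mono divide_right_mono) auto
  finally show "\<bar>\<Sum>l<L v. feat k x v y l * ?\<theta> v l\<bar> \<le> feat_bound * (real (L v) * \<epsilon> + bsqnorm N L ?\<theta> / \<epsilon>)" .
qed (use bounds_nonneg \<epsilon> bsqnorm_nonneg in simp)

lemma integrable_ghat:
  assumes t: "1 \<le> t" and v: "v < N"
  shows "integrable \<M> (\<lambda>\<omega>. gh t \<omega> v)"
proof (rule integrable_const_bound[where B="feat_bound * (real (L v) + \<rho>\<^sup>2)"])
  show "AE \<omega> in \<M>. norm (gh t \<omega> v) \<le> feat_bound * (real (L v) + \<rho>\<^sup>2)"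
    using AE_space AE_theta_bounded
  proof eventually_elim
    case (elim \<omega>)
    then have "bsqnorm N L (th (Suc t) \<omega>) \<le> \<rho>\<^sup>2"
      by (intro bsqnorm_le_of_thnorm_le) simp
    then have "feat_bound * (real (L v) * 1 + bsqnorm N L (th (Suc t) \<omega>) / 1)
        \<le> feat_bound * (real (L v) + \<rho>\<^sup>2)"
      using bounds_nonneg by (intro mult_left_mono) auto
    then show ?case
      using ghat_abs_le[OF elim(1) t v, of 1] by simp
  qed
  have "(\<lambda>\<omega>. feat k x v (ypre t i \<omega>) l) \<in> borel_measurable \<M>" if "i < npre" "l < L v" for i l
    using ypre_measurable[OF t that(1)] v that(2) by (rule feat_measurable[OF kmeas dict])
  then show "(\<lambda>\<omega>. gh t \<omega> v) \<in> borel_measurable \<M>"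
    unfolding ghat_def avg_prewin
    by (intro borel_measurable_divide borel_measurable_sum borel_measurable_times th_measurable) auto
qed

lemma ghat_expectation_tendsto_0:
  assumes v: "v < N"
  shows "(\<lambda>t. \<integral>\<omega>. gh t \<omega> v \<partial>\<M>) \<longlonglongrightarrow> 0"
proof (rule tendsto_zero_of_eps_bound)
  fix \<epsilon> :: real assume \<epsilon>: "0 < \<epsilon>"
  show "\<forall>\<^sub>F t in sequentially.
      \<bar>\<integral>\<omega>. gh t \<omega> v \<partial>\<M>\<bar> \<le> feat_bound * real (L v) * \<epsilon> + feat_bound * msq (Suc t) / \<epsilon>"
    using eventually_ge_at_top[of 1]
  proof eventually_elim
    case (elim t)
    have "\<bar>\<integral>\<omega>. gh t \<omega> v \<partial>\<M>\<bar> \<le> (\<integral>\<omega>. feat_bound * (real (L v) * \<epsilon> + bsqnorm N L (th (Suc t) \<omega>) / \<epsilon>) \<partial>\<M>)"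
      using integrable_ghat[OF elim v] integrable_bsqnorm_th[of "Suc t"] ghat_abs_le[OF _ elim v \<epsilon>]
      by (intro order_trans[OF integral_abs_bound] Bochner_Integration.integral_mono) auto
    also have "\<dots> = feat_bound * real (L v) * \<epsilon> + feat_bound * msq (Suc t) / \<epsilon>"
      using integrable_bsqnorm_th[of "Suc t"] by (simp add: msq_def prob_space algebra_simps)
    finally show ?case .
  qed
qed (use tendsto_mult_right_zero[OF LIMSEQ_Suc[OF msq_tendsto_0]] bounds_nonneg in auto)

end

theorem corollary1:
  fixes \<M> :: "'m measure"
    and N :: nat and W :: "nat \<Rightarrow> nat \<Rightarrow> real"
    and Xs :: "nat \<Rightarrow> 'a measure" and P :: "(nat \<Rightarrow> 'a) measure"
    and k :: "nat \<Rightarrow> 'a \<Rightarrow> 'a \<Rightarrow> real" and Mb :: "nat \<Rightarrow> real"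
    and x :: "nat \<Rightarrow> nat \<Rightarrow> 'a" and L :: "nat \<Rightarrow> nat"
    and lam gam c \<rho> :: real and npre npost :: nat
    and ypre :: "nat \<Rightarrow> nat \<Rightarrow> 'm \<Rightarrow> (nat \<Rightarrow> 'a)"
    and ystr :: "nat \<Rightarrow> 'm \<Rightarrow> (nat \<Rightarrow> 'a)"
    and th1 :: "nat \<Rightarrow> nat \<Rightarrow> real" and \<sigma>t :: "nat \<Rightarrow> real"
  assumes M: "prob_space \<M>"
    and N: "0 < N"
    and W_nonneg: "\<forall>u<N. \<forall>v<N. 0 \<le> W u v"
    and W_sym: "\<forall>u<N. \<forall>v<N. W u v = W v u"
    and W_diag: "\<forall>v<N. W v v = 0"
    \<comment> \<open>Assumption 1\<close>
    and kern: "\<forall>v<N. reproducing_kernel (space (Xs v)) (k v)"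
    and sep: "\<forall>v<N. rkhs_separable (space (Xs v)) (k v)"
    and bnd: "\<forall>v<N. \<forall>a\<in>space (Xs v). \<forall>b\<in>space (Xs v). k v a b \<le> Mb v"
    and kmeas: "\<forall>v<N. (\<lambda>(a, b). k v a b) \<in> borel_measurable (Xs v \<Otimes>\<^sub>M Xs v)"
    and dict: "\<forall>v<N. \<forall>l<L v. x v l \<in> space (Xs v)"
    \<comment> \<open>data under the null p = p': all observations i.i.d. with law P; in particular
        Assumption 2 (independence in time)\<close>
    and indep: "prob_space.indep_vars \<M> (\<lambda>_. PiM {..<N} Xs) (obs_family ypre ystr) (obs_index npre)"
    and distr: "\<forall>j\<in>obs_index npre. distr \<M> (PiM {..<N} Xs) (obs_family ypre ystr j) = P"
    and npre: "0 < npre"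
    and lam: "0 \<le> lam" and gam: "0 < gam"
    and c: "0 < c" and cC: "c * Cmax N W P k x L Mb lam gam < 1"
    and rho: "0 < \<rho>"
    and bounded: "\<forall>t\<ge>1. AE \<omega> in \<M>.
                    thnorm N L (theta N W k x L lam gam npre npost ypre ystr c th1 t \<omega>) \<le> \<rho>"
    and sigma: "\<forall>t\<ge>1. \<forall>v<N.
                  integral\<^sup>L \<M> (delta_sq \<M> N W k x L lam gam npre npost ypre ystr c th1 t v) \<le> (\<sigma>t t)\<^sup>2"
    and sigma_fin: "bdd_above (\<sigma>t ` {1..})"
  shows "\<forall>v<N. (\<lambda>t. integral\<^sup>L \<M> (\<lambda>\<omega>. ghat N W k x L lam gam npre npost ypre ystr c th1 t \<omega> v))
                  \<longlonglongrightarrow> 0"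
proof -
  interpret null_model \<M> N W Xs P k Mb x L lam gam c \<rho> npre npost ypre ystr th1
    using assms by (intro null_model.intro null_model_axioms.intro) auto
  show ?thesis using ghat_expectation_tendsto_0 by blast
qed

end
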